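(* Let $\Omega\subset\mathbb{R}^d$ be Borel, $p>1$, $c$ a metric on $\Omega$, $\mathcal A\subset\mathcal P^c_p(\Omega)$, and let $\delta=W_p^c$ on $\mathcal A$. Assume (i) for all $a_0,a_1\in\mathcal A$ the optimal transport problem $\inf_{\gamma\in\Pi(a_0,a_1)}\int c(x,y)^p\,d\gamma$ has at least one minimizer, the set of minimizers being denoted $\Gamma^*_{a_0,a_1}$; and (ii) $\mathcal M(\mathcal A)$ is identifiable. Let $\Gamma(\mathcal A)$ be an admissible set of atom transport plans and $\Gamma_{\mathcal M}(\mathcal A)$ the set of its finite mixtures. Let $\mu_0=\sum_{j=1}^J\lambda_0^ja_0^j$ and $\mu_1=\sum_{k=1}^K\lambda_1^ka_1^k$ be in $\mathcal M(\mathcal A)$ and define $$\widetilde\delta_{\mathcal M,p}(\mu_0,\mu_1)=\Big(\inf_{\gamma\in\Pi(\mu_0,\mu_1)\cap\Gamma_{\mathcal M}(\mathcal A)}\int_{\Omega\times\Omega}c(x,y)^p\,d\gamma(x,y)\Big)^{1/p}.$$ Then $\widetilde\delta_{\mathcal M,p}(\mu_0,\mu_1)=\delta_{\mathcal M,p}(\mu_0,\mu_1)$. Moreover, the set of minimizers of the problem defining $\widetilde\delta_{\mathcal M,p}(\mu_0,\mu_1)$ is equal to the set of measures of the form $\gamma=\sum_{j=1}^J\sum_{k=1}^K w^*_{jk}\gamma_{jk}$ where $w^*$ is a minimizer of the discrete problem defining $\delta_{\mathcal M,p}(\mu_0,\mu_1)$ and $\gamma_{jk}\in\Gamma^*_{a_0^j,a_1^k}$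 for all $j,k$.
   Context: $\mathcal P^c_p(\Omega)$ is the set of probability measures $\mu$ on $\Omega$ with $\int c(x,x_0)^pd\mu(x)<\infty$ for some $x_0$. $\Pi(\mu,\nu)$ is the set of probability measures on $\Omega\times\Omega$ with marginals $\mu,\nu$, and $W_p^c(\mu,\nu)=(\inf_{\gamma\in\Pi(\mu,\nu)}\int c^p d\gamma)^{1/p}$. $\mathcal L_K$ is the probability simplex in $\mathbb{R}^K$. $\mathcal M(\mathcal A)$ is the set of finite mixtures $\sum_{k=1}^K\lambda^ka^k$, $a^k\in\mathcal A$, $(\lambda^k)\in\mathcal L_K$. For such $\mu_0,\mu_1$, $\delta_{\mathcal M,p}(\mu_0,\mu_1)^p=\min_{w}\sum_{j,k}w_{jk}W_p^c(a_0^j,a_1^k)^p$ over $w\in\mathbb{R}_+^{J\times K}$ with row sums $\lambda_0^j$ and column sums $\lambda_1^k$. Identifiability: whenever $\sum_{j=1}^J\lambda_0^ja_0^j=\sum_{k=1}^K\lambda_1^ka_1^k$ with the $a_0^j$ pairwise distinct and the $a_1^k$ pairwise distinct, then $J=K$ and after reordering $\lambda_0^k=\lambda_1^k$, $a_0^k=a_1^k$ for all $k$. An admissible set of atom transport plans is a set $\Gamma(\mathcal A)=\bigcup_{a_0,a_1\in\mathcal A}\Gamma_{a_0,a_1}\subset\mathcal P(\Omega\times\Omega)$ where each $\Gamma_{a_0,a_1}$ is a convex set with $\Gamma^*_{a_0,a_1}\subset\Gamma_{a_0,a_1}\subset\Pi(a_0,a_1)$. $\Gamma_{\mathcal M}(\mathcal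 A)$ is the set of measures $\sum_{k=1}^K\lambda^k\gamma^k$ with $K\in\mathbb{N}^*$, $\gamma^k\in\Gamma(\mathcal A)$, $(\lambda^k)\in\mathcal L_K$. *)

theory Defs
  imports "HOL-Probability.Probability"
begin

text \<open>Probability measures on a Borel set \<Omega> of a Euclidean space are represented as
  probability measures on the Borel sets of the whole space that are concentrated on \<Omega>.\<close>

definition is_metric_on :: "'a set \<Rightarrow> ('a \<Rightarrow> 'a \<Rightarrow> real) \<Rightarrow> bool" where
  "is_metric_on \<Omega> c \<longleftrightarrow>
     (\<forall>x\<in>\<Omega>. \<forall>y\<in>\<Omega>. (c x y = 0 \<longleftrightarrow> x = y) \<and> c x y = c y x) \<and>
     (\<forall>x\<in>\<Omega>. \<forall>y\<in>\<Omega>. \<forall>z\<in>\<Omega>. c x z \<le> c x y + c y z)"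

definition prob_on :: "'a::topological_space set \<Rightarrow> 'a measure set" where
  "prob_on \<Omega> = {M. prob_space M \<and> sets M = sets borel \<and> emeasure M (UNIV - \<Omega>) = 0}"

definition Pp :: "'a::topological_space set \<Rightarrow> ('a \<Rightarrow> 'a \<Rightarrow> real) \<Rightarrow> real \<Rightarrow> 'a measure set" where
  "Pp \<Omega> c p = {M \<in> prob_on \<Omega>.
      \<exists>x0\<in>\<Omega>. (\<integral>\<^sup>+ x. indicator \<Omega> x * ennreal (c x x0 powr p) \<partial>M) < \<infinity>}"

definition mix :: "'i set \<Rightarrow> ('i \<Rightarrow> real) \<Rightarrow> ('i \<Rightarrow> 'b::topological_space measure) \<Rightarrow> 'b measure" where
  "mix I w m = measure_of UNIV (sets borel) (\<lambda>A. \<Sum>i\<in>I. ennreal (w i) * emeasure (m i) A)"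

definition prob_simplex :: "'i set \<Rightarrow> ('i \<Rightarrow> real) set" where
  "prob_simplex I = {w. (\<forall>i\<in>I. 0 \<le> w i) \<and> (\<Sum>i\<in>I. w i) = 1}"

definition couplings :: "'a::topological_space measure \<Rightarrow> 'a measure \<Rightarrow> ('a \<times> 'a) measure set" where
  "couplings \<mu> \<nu> = {\<gamma>. prob_space \<gamma> \<and> sets \<gamma> = sets borel \<and>
      distr \<gamma> borel fst = \<mu> \<and> distr \<gamma> borel snd = \<nu>}"

definition tcost :: "'a set \<Rightarrow> ('a \<Rightarrow> 'a \<Rightarrow> real) \<Rightarrow> real \<Rightarrow> ('a \<times> 'a) measure \<Rightarrow> ennreal" where
  "tcost \<Omega> c p \<gamma> = (\<integral>\<^sup>+ z. indicator (\<Omega> \<times> \<Omega>) z * ennreal (c (fst z) (snd z) powr p) \<partial>\<gamma>)"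

definition OTval :: "'a::topological_space set \<Rightarrow> ('a \<Rightarrow> 'a \<Rightarrow> real) \<Rightarrow> real \<Rightarrow> 'a measure \<Rightarrow> 'a measure \<Rightarrow> ennreal" where
  "OTval \<Omega> c p \<mu> \<nu> = (INF \<gamma>\<in>couplings \<mu> \<nu>. tcost \<Omega> c p \<gamma>)"

definition Wp :: "'a::topological_space set \<Rightarrow> ('a \<Rightarrow> 'a \<Rightarrow> real) \<Rightarrow> real \<Rightarrow> 'a measure \<Rightarrow> 'a measure \<Rightarrow> real" where
  "Wp \<Omega> c p \<mu> \<nu> = enn2real (OTval \<Omega> c p \<mu> \<nu>) powr (1 / p)"

definition opt_plans :: "'a::topological_space set \<Rightarrow> ('a \<Rightarrow> 'a \<Rightarrow> real) \<Rightarrow> real \<Rightarrow> 'a measure \<Rightarrow> 'a measure \<Rightarrow> ('a \<times> 'a) measure set" where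
  "opt_plans \<Omega> c p \<mu> \<nu> = {\<gamma> \<in> couplings \<mu> \<nu>. tcost \<Omega> c p \<gamma> = OTval \<Omega> c p \<mu> \<nu>}"

definition mixtures :: "'b::topological_space measure set \<Rightarrow> 'b measure set" where
  "mixtures \<A> = {mix {..<K} lam a | (K::nat) lam a. 0 < K \<and> lam \<in> prob_simplex {..<K} \<and> (\<forall>k<K. a k \<in> \<A>)}"

definition identifiable :: "'b::topological_space measure set \<Rightarrow> bool" where
  "identifiable \<A> \<longleftrightarrow>
    (\<forall>(J::nat) (K::nat) lam0 a0 lam1 a1.
       0 < J \<and> 0 < K \<and>
       lam0 \<in> prob_simplex {..<J} \<and> (\<forall>j<J. 0 < lam0 j \<and> a0 j \<in> \<A>) \<and> inj_on a0 {..<J} \<and>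
       lam1 \<in> prob_simplex {..<K} \<and> (\<forall>k<K. 0 < lam1 k \<and> a1 k \<in> \<A>) \<and> inj_on a1 {..<K} \<and>
       mix {..<J} lam0 a0 = mix {..<K} lam1 a1
     \<longrightarrow> J = K \<and> (\<exists>\<sigma>. \<sigma> permutes {..<K} \<and>
                         (\<forall>k<K. lam0 (\<sigma> k) = lam1 k \<and> a0 (\<sigma> k) = a1 k)))"

definition convex_meas :: "'b::topological_space measure set \<Rightarrow> bool" where
  "convex_meas S \<longleftrightarrow> (\<forall>\<gamma>0\<in>S. \<forall>\<gamma>1\<in>S. \<forall>t::real. 0 \<le> t \<and> t \<le> 1 \<longrightarrow>
      mix {0::nat, 1} (\<lambda>i. if i = 0 then 1 - t else t) (\<lambda>i. if i = 0 then \<gamma>0 else \<gamma>1) \<in> S)"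

definition admissible :: "'a::topological_space set \<Rightarrow> ('a \<Rightarrow> 'a \<Rightarrow> real) \<Rightarrow> real \<Rightarrow> 'a measure set \<Rightarrow>
    ('a measure \<Rightarrow> 'a measure \<Rightarrow> ('a \<times> 'a) measure set) \<Rightarrow> bool" where
  "admissible \<Omega> c p \<A> G \<longleftrightarrow> (\<forall>a0\<in>\<A>. \<forall>a1\<in>\<A>.
      convex_meas (G a0 a1) \<and> opt_plans \<Omega> c p a0 a1 \<subseteq> G a0 a1 \<and> G a0 a1 \<subseteq> couplings a0 a1)"

definition Gam_all :: "'a measure set \<Rightarrow> ('a measure \<Rightarrow> 'a measure \<Rightarrow> ('a \<times> 'a) measure set) \<Rightarrow> ('a \<times> 'a) measure set" where
  "Gam_all \<A> G = (\<Union>a0\<in>\<A>. \<Union>a1\<in>\<A>. G a0 a1)"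

definition Gam_mix :: "'a::topological_space measure set \<Rightarrow> ('a measure \<Rightarrow> 'a measure \<Rightarrow> ('a \<times> 'a) measure set) \<Rightarrow> ('a \<times> 'a) measure set" where
  "Gam_mix \<A> G = mixtures (Gam_all \<A> G)"

definition disc_plans :: "nat \<Rightarrow> nat \<Rightarrow> (nat \<Rightarrow> real) \<Rightarrow> (nat \<Rightarrow> real) \<Rightarrow> (nat \<Rightarrow> nat \<Rightarrow> real) set" where
  "disc_plans J K lam0 lam1 = {w. (\<forall>j<J. \<forall>k<K. 0 \<le> w j k) \<and>
      (\<forall>j<J. (\<Sum>k<K. w j k) = lam0 j) \<and> (\<forall>k<K. (\<Sum>j<J. w j k) = lam1 k)}"

definition disc_cost :: "'a::topological_space set \<Rightarrow> ('a \<Rightarrow> 'a \<Rightarrow> real) \<Rightarrow> real \<Rightarrow> nat \<Rightarrow> nat \<Rightarrow>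
    (nat \<Rightarrow> 'a measure) \<Rightarrow> (nat \<Rightarrow> 'a measure) \<Rightarrow> (nat \<Rightarrow> nat \<Rightarrow> real) \<Rightarrow> real" where
  "disc_cost \<Omega> c p J K a0 a1 w = (\<Sum>j<J. \<Sum>k<K. w j k * (Wp \<Omega> c p (a0 j) (a1 k)) powr p)"

definition delta_M :: "'a::topological_space set \<Rightarrow> ('a \<Rightarrow> 'a \<Rightarrow> real) \<Rightarrow> real \<Rightarrow> nat \<Rightarrow> nat \<Rightarrow>
    (nat \<Rightarrow> real) \<Rightarrow> (nat \<Rightarrow> 'a measure) \<Rightarrow> (nat \<Rightarrow> real) \<Rightarrow> (nat \<Rightarrow> 'a measure) \<Rightarrow> real" where
  "delta_M \<Omega> c p J K lam0 a0 lam1 a1 =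
     (Inf (disc_cost \<Omega> c p J K a0 a1 ` disc_plans J K lam0 lam1)) powr (1 / p)"

definition disc_minimizers :: "'a::topological_space set \<Rightarrow> ('a \<Rightarrow> 'a \<Rightarrow> real) \<Rightarrow> real \<Rightarrow> nat \<Rightarrow> nat \<Rightarrow>
    (nat \<Rightarrow> real) \<Rightarrow> (nat \<Rightarrow> 'a measure) \<Rightarrow> (nat \<Rightarrow> real) \<Rightarrow> (nat \<Rightarrow> 'a measure) \<Rightarrow> (nat \<Rightarrow> nat \<Rightarrow> real) set" where
  "disc_minimizers \<Omega> c p J K lam0 a0 lam1 a1 =
     {w \<in> disc_plans J K lam0 lam1.
        disc_cost \<Omega> c p J K a0 a1 w = Inf (disc_cost \<Omega> c p J K a0 a1 ` disc_plans J K lam0 lam1)}"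

definition delta_tilde :: "'a::topological_space set \<Rightarrow> ('a \<Rightarrow> 'a \<Rightarrow> real) \<Rightarrow> real \<Rightarrow> 'a measure set \<Rightarrow>
    ('a measure \<Rightarrow> 'a measure \<Rightarrow> ('a \<times> 'a) measure set) \<Rightarrow> 'a measure \<Rightarrow> 'a measure \<Rightarrow> real" where
  "delta_tilde \<Omega> c p \<A> G \<mu>0 \<mu>1 =
     enn2real (INF \<gamma>\<in>couplings \<mu>0 \<mu>1 \<inter> Gam_mix \<A> G. tcost \<Omega> c p \<gamma>) powr (1 / p)"

definition tilde_minimizers :: "'a::topological_space set \<Rightarrow> ('a \<Rightarrow> 'a \<Rightarrow> real) \<Rightarrow> real \<Rightarrow> 'a measure set \<Rightarrow>
    ('a measure \<Rightarrow> 'a measure \<Rightarrow> ('a \<times> 'a) measure set) \<Rightarrow> 'a measure \<Rightarrow> 'a measure \<Rightarrow> ('a \<times> 'a) measure set" where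
  "tilde_minimizers \<Omega> c p \<A> G \<mu>0 \<mu>1 =
     {\<gamma> \<in> couplings \<mu>0 \<mu>1 \<inter> Gam_mix \<A> G.
        tcost \<Omega> c p \<gamma> = (INF \<gamma>'\<in>couplings \<mu>0 \<mu>1 \<inter> Gam_mix \<A> G. tcost \<Omega> c p \<gamma>')}"

end

theory Submission
  imports Defs
begin

text \<open>An admissible plan \<open>\<gamma>\<close>, i.e. a coupling of \<open>\<mu>\<^sub>0 = \<Sum>\<^sub>j lam0 j \<cdot> a0 j\<close> and
  \<open>\<mu>\<^sub>1 = \<Sum>\<^sub>k lam1 k \<cdot> a1 k\<close> lying in \<open>Gam_mix \<A> G\<close>, is a finite mixture \<open>\<Sum>\<^sub>n \<nu> n \<cdot> \<gamma>s n\<close>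
  of atom plans \<open>\<gamma>s n \<in> G (b0 n) (b1 n)\<close>. Its marginals are the mixtures \<open>\<Sum>\<^sub>n \<nu> n \<cdot> b0 n\<close>
  and \<open>\<Sum>\<^sub>n \<nu> n \<cdot> b1 n\<close>, so by identifiability every atom carries the same total weight there
  as in the given representations of \<open>\<mu>\<^sub>0\<close> and \<open>\<mu>\<^sub>1\<close>. Grouping the components into blocks
  by the pair of atoms they transport, and sharing the mass of each block among repeated atoms
  in proportion to \<open>lam0\<close> and \<open>lam1\<close>, yields a discrete plan \<open>w\<close> and writes
  \<open>\<gamma> = \<Sum>\<^sub>j\<^sub>k w j k \<cdot> g j k\<close> with \<open>g j k\<close> a coupling of \<open>a0 j\<close> and \<open>a1 k\<close>. Since each
  \<open>\<gamma>s n\<close> costs at least \<open>W\<^sub>p(b0 n, b1 n)\<^sup>p\<close>, the cost of \<open>\<gamma>\<close> is at least the discrete cost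
  of \<open>w\<close>, with equality only if every \<open>g j k\<close> is optimal. Conversely, gluing a discrete plan
  with optimal atom plans gives an admissible plan whose cost is exactly its discrete cost.\<close>

lemma ennreal_sum_le_sum_imp_eq:
  fixes f g :: "'i \<Rightarrow> ennreal"
  assumes "finite S" and le: "\<And>i. i \<in> S \<Longrightarrow> g i \<le> f i" and "sum f S \<le> sum g S"
    and "sum g S < \<infinity>" and "i \<in> S"
  shows "f i = g i"
proof (rule ccontr)
  assume "f i \<noteq> g i"
  then have less: "g i < f i"
    using le[OF assms(5)] by simp
  have rest: "sum g (S - {i}) \<le> sum f (S - {i})"
    using le by (intro sum_mono) auto
  have "sum g (S - {i}) < \<infinity>"
    using assms(4) sum.remove[OF assms(1,5), of g] by (simp add: top.not_eq_extremum)
  then have "sum g (S - {i}) + g i < sum g (S - {i}) + f i"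
    using less by (simp add: ennreal_add_left_cancel_less)
  also have "\<dots> \<le> sum f (S - {i}) + f i"
    using rest by (simp add: add_right_mono)
  finally have "sum g S < sum f S"
    using sum.remove[OF assms(1,5), of g] sum.remove[OF assms(1,5), of f] by (simp add: add.commute)
  then show False
    using assms(3) by simp
qed

lemma INF_le_ennreal_Inf:
  fixes f :: "'s \<Rightarrow> ennreal" and D :: "real set"
  assumes D: "D \<noteq> {}" "\<And>d. d \<in> D \<Longrightarrow> 0 \<le> d"
    and upper: "\<And>d. d \<in> D \<Longrightarrow> \<exists>s\<in>S. f s \<le> ennreal d"
  shows "(INF s\<in>S. f s) \<le> ennreal (Inf D)"
proof (rule ccontr)
  assume "\<not> (INF s\<in>S. f s) \<le> ennreal (Inf D)"
  then have "ennreal (Inf D) < (INF s\<in>S. f s)"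
    by simp
  then obtain y where y: "ennreal (Inf D) < y" "y < (INF s\<in>S. f s)"
    using dense by blast
  then obtain r where r: "y = ennreal r" "0 \<le> r"
    by (cases y) auto
  moreover have "0 \<le> Inf D"
    using D by (intro cInf_greatest) auto
  ultimately have "Inf D < r"
    using y(1) by (simp add: ennreal_less_iff)
  then obtain d where d: "d \<in> D" "d < r"
    using cInf_lessD[OF D(1)] by blast
  then obtain s where "s \<in> S" "f s \<le> ennreal d"
    using upper by blast
  then have "(INF s\<in>S. f s) \<le> ennreal d"
    by (simp add: INF_lower2)
  also have "ennreal d < y"
    using d D(2)[OF d(1)] r by (simp add: ennreal_lessI)
  finally show False
    using y(2) by simp
qed

lemma INF_eq_ennreal_Inf:
  fixes f :: "'s \<Rightarrow> ennreal" and D :: "real set"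
  assumes D: "D \<noteq> {}" "\<And>d. d \<in> D \<Longrightarrow> 0 \<le> d"
    and lower: "\<And>s. s \<in> S \<Longrightarrow> \<exists>d\<in>D. ennreal d \<le> f s"
    and upper: "\<And>d. d \<in> D \<Longrightarrow> \<exists>s\<in>S. f s \<le> ennreal d"
  shows "(INF s\<in>S. f s) = ennreal (Inf D)"
proof (rule antisym)
  show "(INF s\<in>S. f s) \<le> ennreal (Inf D)"
    using D upper by (rule INF_le_ennreal_Inf)
  show "ennreal (Inf D) \<le> (INF s\<in>S. f s)"
  proof (rule INF_greatest)
    fix s assume "s \<in> S"
    then obtain d where "d \<in> D" "ennreal d \<le> f s"
      using lower by blast
    moreover have "Inf D \<le> d"
      using \<open>d \<in> D\<close> D(2) by (intro cInf_lower) (auto simp: bdd_below_def)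
    ultimately show "ennreal (Inf D) \<le> f s"
      using ennreal_leI order_trans by blast
  qed
qed

section \<open>Finite mixtures of measures\<close>

lemma sets_mix [simp]: "sets (mix I w m) = sets borel"
  unfolding mix_def using sets.sigma_sets_eq[of borel] by (simp add: sets_measure_of_conv)

lemma space_mix [simp]: "space (mix I w m) = UNIV"
  unfolding mix_def by (simp add: space_measure_of_conv)

lemma emeasure_mix:
  assumes "finite I" and "\<And>i. i \<in> I \<Longrightarrow> sets (m i) = sets borel" and "A \<in> sets borel"
  shows "emeasure (mix I w m) A = (\<Sum>i\<in>I. ennreal (w i) * emeasure (m i) A)"
  unfolding mix_def
proof (rule emeasure_measure_of_sigma)
  show "countably_additive (sets borel) (\<lambda>A. \<Sum>i\<in>I. ennreal (w i) * emeasure (m i) A)"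
    unfolding countably_additive_def
  proof (intro allI impI)
    fix F :: "nat \<Rightarrow> 'b set" assume F: "range F \<subseteq> sets borel" "disjoint_family F"
    have "(\<Sum>n. \<Sum>i\<in>I. ennreal (w i) * emeasure (m i) (F n))
        = (\<Sum>i\<in>I. \<Sum>n. ennreal (w i) * emeasure (m i) (F n))"
      by (rule suminf_sum) simp
    also have "\<dots> = (\<Sum>i\<in>I. ennreal (w i) * emeasure (m i) (\<Union>n. F n))"
      using F assms(2) by (intro sum.cong refl) (simp add: suminf_emeasure)
    finally show "(\<Sum>n. \<Sum>i\<in>I. ennreal (w i) * emeasure (m i) (F n))
        = (\<Sum>i\<in>I. ennreal (w i) * emeasure (m i) (\<Union>n. F n))" .
  qed
qed (use assms sets.sigma_algebra_axioms[of borel] in \<open>simp_all add: positive_def\<close>)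

lemma emeasure_mix_eq_sum_measure:
  assumes "finite I" and "\<And>i. i \<in> I \<Longrightarrow> prob_space (m i) \<and> sets (m i) = sets borel"
    and "\<And>i. i \<in> I \<Longrightarrow> 0 \<le> w i" and "A \<in> sets borel"
  shows "emeasure (mix I w m) A = ennreal (\<Sum>i\<in>I. w i * measure (m i) A)"
proof -
  have "emeasure (mix I w m) A = (\<Sum>i\<in>I. ennreal (w i * measure (m i) A))"
    using assms by (simp add: emeasure_mix finite_measure.emeasure_eq_measure[OF prob_space.axioms(1)] ennreal_mult)
  also have "\<dots> = ennreal (\<Sum>i\<in>I. w i * measure (m i) A)"
    using assms(3) by (intro sum_ennreal) simp
  finally show ?thesis .
qed

lemma measure_mix:
  assumes "finite I" and "\<And>i. i \<in> I \<Longrightarrow> prob_space (m i) \<and> sets (m i) = sets borel"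
    and "\<And>i. i \<in> I \<Longrightarrow> 0 \<le> w i" and "A \<in> sets borel"
  shows "measure (mix I w m) A = (\<Sum>i\<in>I. w i * measure (m i) A)"
  using emeasure_mix_eq_sum_measure[OF assms] assms(3) unfolding measure_def
  by (simp add: sum_nonneg)

lemma mix_eqI:
  "(\<And>A. A \<in> sets borel \<Longrightarrow> emeasure (mix I w m) A = emeasure (mix I' w' m') A)
    \<Longrightarrow> mix I w m = mix I' w' m'"
  by (intro measure_eqI) simp_all

lemma mix_cong:
  assumes "\<And>i. i \<in> I \<Longrightarrow> w i = w' i" and "\<And>i. i \<in> I \<Longrightarrow> w i \<noteq> 0 \<Longrightarrow> m i = m' i"
  shows "mix I w m = mix I w' m'"
proof -
  have "ennreal (w i) * emeasure (m i) A = ennreal (w' i) * emeasure (m' i) A" if "i \<in> I" for i A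
    using assms that by (cases "w i = 0") auto
  then have "(\<Sum>i\<in>I. ennreal (w i) * emeasure (m i) A) = (\<Sum>i\<in>I. ennreal (w' i) * emeasure (m' i) A)" for A
    by (intro sum.cong) auto
  then show ?thesis
    unfolding mix_def by simp
qed

lemma mix_reindex:
  assumes "bij_betw h I' I"
  shows "mix I' (w \<circ> h) (m \<circ> h) = mix I w m"
proof -
  have "(\<Sum>i\<in>I'. ennreal (w (h i)) * emeasure (m (h i)) A) = (\<Sum>i\<in>I. ennreal (w i) * emeasure (m i) A)" for A
    by (rule sum.reindex_bij_betw[OF assms])
  then show ?thesis
    unfolding mix_def by simp
qed

lemma prob_simplex_nonempty: "w \<in> prob_simplex I \<Longrightarrow> I \<noteq> {}"
  by (auto simp: prob_simplex_def)

lemma mix_in_mixtures: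
  assumes I: "finite I" and w: "w \<in> prob_simplex I" and m: "\<And>i. i \<in> I \<Longrightarrow> m i \<in> S"
  shows "mix I w m \<in> mixtures S"
proof -
  obtain h where h: "bij_betw h {..<card I} I"
    using ex_bij_betw_nat_finite[OF I] by (auto simp: atLeast0LessThan)
  have "0 < card I"
    using I prob_simplex_nonempty[OF w] by (simp add: card_gt_0_iff)
  moreover have "w \<circ> h \<in> prob_simplex {..<card I}"
    using w h sum.reindex_bij_betw[OF h, of w] by (auto simp: prob_simplex_def bij_betw_def)
  moreover have "\<forall>n<card I. (m \<circ> h) n \<in> S"
    using m h by (auto simp: bij_betw_def)
  ultimately show ?thesis
    unfolding mixtures_def mix_reindex[OF h, symmetric] by blast
qed

lemma prob_space_mix:
  assumes "finite I" and "\<And>i. i \<in> I \<Longrightarrow> prob_space (m i) \<and> sets (m i) = sets borel"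
    and w: "w \<in> prob_simplex I"
  shows "prob_space (mix I w m)"
proof (rule prob_spaceI)
  have "\<And>i. i \<in> I \<Longrightarrow> measure (m i) UNIV = 1"
    using assms(2) by (metis prob_space.prob_space sets_eq_imp_space_eq space_borel)
  then show "emeasure (mix I w m) (space (mix I w m)) = 1"
    using w by (simp add: emeasure_mix_eq_sum_measure[OF assms(1,2)] prob_simplex_def)
qed

lemma mix_const:
  assumes w: "w \<in> prob_simplex I" and m: "sets m = sets borel"
  shows "mix I w (\<lambda>_. m) = m"
proof -
  have "(\<Sum>i\<in>I. ennreal (w i)) = 1"
    using w by (subst sum_ennreal) (auto simp: prob_simplex_def)
  then have "(\<lambda>A. \<Sum>i\<in>I. ennreal (w i) * emeasure m A) = emeasure m"
    by (simp only: flip: sum_distrib_right) simp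
  then show ?thesis
    unfolding mix_def using measure_of_of_measure[of m] m sets_eq_imp_space_eq[OF m] by simp
qed

lemma mix_product_fst:
  assumes "\<And>j k. j \<in> I \<Longrightarrow> k \<in> K \<Longrightarrow> 0 \<le> w j k"
  shows "mix (I \<times> K) (\<lambda>(j, k). w j k) (\<lambda>(j, k). m j) = mix I (\<lambda>j. \<Sum>k\<in>K. w j k) m"
proof -
  have "(\<Sum>(j, k)\<in>I \<times> K. ennreal (w j k) * emeasure (m j) A)
      = (\<Sum>j\<in>I. ennreal (\<Sum>k\<in>K. w j k) * emeasure (m j) A)" for A
  proof -
    have "(\<Sum>(j, k)\<in>I \<times> K. ennreal (w j k) * emeasure (m j) A)
        = (\<Sum>j\<in>I. (\<Sum>k\<in>K. ennreal (w j k)) * emeasure (m j) A)"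
      by (simp add: sum.cartesian_product[symmetric] sum_distrib_right)
    also have "\<dots> = (\<Sum>j\<in>I. ennreal (\<Sum>k\<in>K. w j k) * emeasure (m j) A)"
      using assms by (intro sum.cong refl) (simp add: sum_ennreal)
    finally show ?thesis .
  qed
  then show ?thesis
    unfolding mix_def by (simp add: case_prod_beta')
qed

lemma mix_product_snd:
  assumes "\<And>j k. j \<in> I \<Longrightarrow> k \<in> K \<Longrightarrow> 0 \<le> w j k"
  shows "mix (I \<times> K) (\<lambda>(j, k). w j k) (\<lambda>(j, k). m k) = mix K (\<lambda>k. \<Sum>j\<in>I. w j k) m"
proof -
  have "(\<Sum>(j, k)\<in>I \<times> K. ennreal (w j k) * emeasure (m k) A)
      = (\<Sum>k\<in>K. ennreal (\<Sum>j\<in>I. w j k) * emeasure (m k) A)" for A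
  proof -
    have "(\<Sum>(j, k)\<in>I \<times> K. ennreal (w j k) * emeasure (m k) A)
        = (\<Sum>k\<in>K. (\<Sum>j\<in>I. ennreal (w j k)) * emeasure (m k) A)"
      by (simp add: sum.cartesian_product[symmetric] sum_distrib_right sum.swap[of _ I])
    also have "\<dots> = (\<Sum>k\<in>K. ennreal (\<Sum>j\<in>I. w j k) * emeasure (m k) A)"
      using assms by (intro sum.cong refl) (simp add: sum_ennreal)
    finally show ?thesis .
  qed
  then show ?thesis
    unfolding mix_def by (simp add: case_prod_beta')
qed

lemma distr_mix:
  assumes I: "finite I" and m: "\<And>i. i \<in> I \<Longrightarrow> sets (m i) = sets borel"
    and f: "f \<in> borel_measurable borel"
  shows "distr (mix I w m) borel f = mix I w (\<lambda>i. distr (m i) borel f)"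
proof (rule measure_eqI)
  fix A :: "'c set" assume "A \<in> sets (distr (mix I w m) borel f)"
  then have A: "A \<in> sets borel" by simp
  have f_mix: "f \<in> measurable (mix I w m) borel"
    using f measurable_cong_sets[OF sets_mix refl] by blast
  have f_m: "f \<in> measurable (m i) borel" if "i \<in> I" for i
    using f measurable_cong_sets[OF m[OF that] refl] by blast
  have "f -` A \<in> sets borel"
    using f A by (metis measurable_sets space_borel Int_UNIV_right)
  then have "emeasure (distr (mix I w m) borel f) A = (\<Sum>i\<in>I. ennreal (w i) * emeasure (m i) (f -` A))"
    using emeasure_distr[OF f_mix A] emeasure_mix[OF I m] by simp
  also have "\<dots> = (\<Sum>i\<in>I. ennreal (w i) * emeasure (distr (m i) borel f) A)"
    using f_m A m by (intro sum.cong refl) (simp add: emeasure_distr sets_eq_imp_space_eq)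
  also have "\<dots> = emeasure (mix I w (\<lambda>i. distr (m i) borel f)) A"
    using A I by (intro emeasure_mix[symmetric]) simp_all
  finally show "emeasure (distr (mix I w m) borel f) A = emeasure (mix I w (\<lambda>i. distr (m i) borel f)) A" .
qed simp

lemma nn_integral_mix:
  assumes I: "finite I" and m: "\<And>i. i \<in> I \<Longrightarrow> sets (m i) = sets borel"
    and f: "f \<in> borel_measurable borel"
  shows "(\<integral>\<^sup>+x. f x \<partial>mix I w m) = (\<Sum>i\<in>I. ennreal (w i) * (\<integral>\<^sup>+x. f x \<partial>m i))"
  using f
proof induction
  case (cong f g)
  have "\<And>i. i \<in> I \<Longrightarrow> (\<integral>\<^sup>+x. f x \<partial>m i) = (\<integral>\<^sup>+x. g x \<partial>m i)"
    using cong m by (intro nn_integral_cong) (simp add: sets_eq_imp_space_eq)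
  moreover have "(\<integral>\<^sup>+x. f x \<partial>mix I w m) = (\<integral>\<^sup>+x. g x \<partial>mix I w m)"
    using cong by (intro nn_integral_cong) simp
  ultimately show ?case using cong by simp
next
  case (set A)
  then show ?case
    using I m by (simp add: emeasure_mix sets_eq_imp_space_eq cong: sum.cong)
next
  case (mult u c)
  have "u \<in> borel_measurable (mix I w m)" "\<And>i. i \<in> I \<Longrightarrow> u \<in> borel_measurable (m i)"
    using mult measurable_cong_sets[OF sets_mix refl] measurable_cong_sets[OF m refl] by blast+
  then show ?case
    using mult by (simp add: nn_integral_cmult sum_distrib_left mult.left_commute cong: sum.cong)
next
  case (add u v)
  have "u \<in> borel_measurable (mix I w m)" "v \<in> borel_measurable (mix I w m)"
    "\<And>i. i \<in> I \<Longrightarrow> u \<in> borel_measurable (m i)" "\<And>i. i \<in> I \<Longrightarrow> v \<in> borel_measurable (m i)"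
    using add measurable_cong_sets[OF sets_mix refl] measurable_cong_sets[OF m refl] by blast+
  then show ?case
    using add by (simp add: nn_integral_add sum.distrib distrib_left cong: sum.cong)
next
  case (seq U)
  have mix_U: "\<And>j. U j \<in> borel_measurable (mix I w m)"
    using seq measurable_cong_sets[OF sets_mix refl] by blast
  have m_U: "\<And>i j. i \<in> I \<Longrightarrow> U j \<in> borel_measurable (m i)"
    using seq measurable_cong_sets[OF m refl] by blast
  have "(\<integral>\<^sup>+x. (SUP j. U j) x \<partial>mix I w m) = (SUP j. \<Sum>i\<in>I. ennreal (w i) * (\<integral>\<^sup>+x. U j x \<partial>m i))"
    using nn_integral_monotone_convergence_SUP[OF seq(3) mix_U] seq by (simp add: image_comp)
  also have "\<dots> = (\<Sum>i\<in>I. SUP j. ennreal (w i) * (\<integral>\<^sup>+x. U j x \<partial>m i))"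
    using seq(3) by (intro ennreal_SUP_sum)
      (auto simp: incseq_def le_fun_def intro!: mult_left_mono nn_integral_mono)
  also have "\<dots> = (\<Sum>i\<in>I. ennreal (w i) * (\<integral>\<^sup>+x. (SUP j. U j) x \<partial>m i))"
    using nn_integral_monotone_convergence_SUP[OF seq(3) m_U]
    by (intro sum.cong refl) (simp add: image_comp SUP_mult_left_ennreal)
  finally show ?case .
qed

section \<open>Couplings and transport costs\<close>

lemma fst_snd_borel_measurable:
  "fst \<in> borel_measurable (borel :: ('a::second_countable_topology \<times> 'b::second_countable_topology) measure)"
  "snd \<in> borel_measurable (borel :: ('a::second_countable_topology \<times> 'b::second_countable_topology) measure)"
  using measurable_fst[of "borel :: 'a measure" "borel :: 'b measure"]
    measurable_snd[of "borel :: 'a measure" "borel :: 'b measure"]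
  unfolding borel_prod .

lemma couplingsD:
  assumes "\<gamma> \<in> couplings \<mu> \<nu>"
  shows "prob_space \<gamma>" "sets \<gamma> = sets borel" "distr \<gamma> borel fst = \<mu>" "distr \<gamma> borel snd = \<nu>"
  using assms unfolding couplings_def by auto

lemma mix_in_couplings:
  fixes \<gamma> :: "'i \<Rightarrow> ('a::second_countable_topology \<times> 'a) measure"
  assumes I: "finite I" and w: "w \<in> prob_simplex I" and \<gamma>: "\<And>i. i \<in> I \<Longrightarrow> \<gamma> i \<in> couplings (\<mu> i) (\<nu> i)"
  shows "mix I w \<gamma> \<in> couplings (mix I w \<mu>) (mix I w \<nu>)"
proof -
  have sets_\<gamma>: "\<And>i. i \<in> I \<Longrightarrow> sets (\<gamma> i) = sets borel"
    by (rule couplingsD(2)[OF \<gamma>])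
  have "distr (mix I w \<gamma>) borel fst = mix I w (\<lambda>i. distr (\<gamma> i) borel fst)"
    by (rule distr_mix[OF I sets_\<gamma> fst_snd_borel_measurable(1)])
  moreover have "distr (mix I w \<gamma>) borel snd = mix I w (\<lambda>i. distr (\<gamma> i) borel snd)"
    by (rule distr_mix[OF I sets_\<gamma> fst_snd_borel_measurable(2)])
  moreover have "mix I w (\<lambda>i. distr (\<gamma> i) borel fst) = mix I w \<mu>"
    "mix I w (\<lambda>i. distr (\<gamma> i) borel snd) = mix I w \<nu>"
    using couplingsD(3,4)[OF \<gamma>] by (auto intro: mix_cong)
  moreover have "prob_space (mix I w \<gamma>)"
    using prob_space_mix[OF I _ w] couplingsD(1,2)[OF \<gamma>] by blast
  ultimately show ?thesis
    unfolding couplings_def by simp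
qed

lemma mix_in_couplings_const:
  fixes \<gamma> :: "'i \<Rightarrow> ('a::second_countable_topology \<times> 'a) measure"
  assumes "finite I" and w: "w \<in> prob_simplex I" and "\<And>i. i \<in> I \<Longrightarrow> \<gamma> i \<in> couplings \<mu> \<nu>"
    and "sets \<mu> = sets borel" and "sets \<nu> = sets borel"
  shows "mix I w \<gamma> \<in> couplings \<mu> \<nu>"
  using mix_in_couplings[OF assms(1-3)] mix_const[OF w assms(4)] mix_const[OF w assms(5)] by simp

lemma nn_integral_coupling_fst:
  fixes \<mu> :: "'a::second_countable_topology measure"
  assumes "\<gamma> \<in> couplings \<mu> \<nu>" and "f \<in> borel_measurable borel"
  shows "(\<integral>\<^sup>+z. f (fst z) \<partial>\<gamma>) = (\<integral>\<^sup>+x. f x \<partial>\<mu>)"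
proof -
  have "fst \<in> measurable \<gamma> borel"
    unfolding measurable_cong_sets[OF couplingsD(2)[OF assms(1)] refl]
    by (rule fst_snd_borel_measurable(1))
  moreover have "f \<in> borel_measurable (distr \<gamma> borel fst)"
    unfolding measurable_cong_sets[OF sets_distr refl] by (rule assms(2))
  ultimately show ?thesis
    using nn_integral_distr couplingsD(3)[OF assms(1)] by metis
qed

lemma nn_integral_coupling_snd:
  fixes \<nu> :: "'a::second_countable_topology measure"
  assumes "\<gamma> \<in> couplings \<mu> \<nu>" and "f \<in> borel_measurable borel"
  shows "(\<integral>\<^sup>+z. f (snd z) \<partial>\<gamma>) = (\<integral>\<^sup>+y. f y \<partial>\<nu>)"
proof -
  have "snd \<in> measurable \<gamma> borel"
    unfolding measurable_cong_sets[OF couplingsD(2)[OF assms(1)] refl]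
    by (rule fst_snd_borel_measurable(2))
  moreover have "f \<in> borel_measurable (distr \<gamma> borel snd)"
    unfolding measurable_cong_sets[OF sets_distr refl] by (rule assms(2))
  ultimately show ?thesis
    using nn_integral_distr couplingsD(4)[OF assms(1)] by metis
qed

lemma tcost_integrand_measurable:
  fixes \<Omega> :: "'a::second_countable_topology set"
  assumes \<Omega>: "\<Omega> \<in> sets borel"
    and c: "(\<lambda>z. c (fst z) (snd z)) \<in> borel_measurable (restrict_space borel (\<Omega> \<times> \<Omega>))"
  shows "(\<lambda>z. indicator (\<Omega> \<times> \<Omega>) z * ennreal (c (fst z) (snd z) powr p)) \<in> borel_measurable borel"
proof -
  have "\<Omega> \<times> \<Omega> \<in> sets (borel :: ('a \<times> 'a) measure)"
    using \<Omega> by (metis borel_prod pair_measureI)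
  moreover have "(\<lambda>z. ennreal (c (fst z) (snd z) powr p)) \<in> borel_measurable (restrict_space borel (\<Omega> \<times> \<Omega>))"
    using c by measurable
  ultimately show ?thesis
    by (subst (asm) borel_measurable_restrict_space_iff_ennreal) (simp_all add: mult.commute)
qed

lemma tcost_mix:
  fixes \<Omega> :: "'a::second_countable_topology set"
  assumes "\<Omega> \<in> sets borel"
    and "(\<lambda>z. c (fst z) (snd z)) \<in> borel_measurable (restrict_space borel (\<Omega> \<times> \<Omega>))"
    and "finite I" and "\<And>i. i \<in> I \<Longrightarrow> sets (m i) = sets borel"
  shows "tcost \<Omega> c p (mix I w m) = (\<Sum>i\<in>I. ennreal (w i) * tcost \<Omega> c p (m i))"
  unfolding tcost_def by (rule nn_integral_mix[OF assms(3,4) tcost_integrand_measurable[OF assms(1,2)]])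

lemma moment_integrand_measurable:
  fixes \<Omega> :: "'a::second_countable_topology set"
  assumes "\<Omega> \<in> sets borel"
    and "(\<lambda>z. c (fst z) (snd z)) \<in> borel_measurable (restrict_space borel (\<Omega> \<times> \<Omega>))"
    and "x0 \<in> \<Omega>"
  shows "(\<lambda>x. indicator \<Omega> x * ennreal (c x x0 powr p)) \<in> borel_measurable borel"
proof -
  have "(\<lambda>x. (x, x0)) \<in> measurable (borel :: 'a measure) borel"
    unfolding borel_prod[symmetric] by measurable
  from measurable_compose[OF this tcost_integrand_measurable[OF assms(1,2)]]
  show ?thesis
    using assms(3) by (simp add: indicator_def)
qed

lemma pair_measure_in_couplings:
  fixes a b :: "'a::second_countable_topology measure"
  assumes "prob_space a" "prob_space b" "sets a = sets borel" "sets b = sets borel"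
  shows "a \<Otimes>\<^sub>M b \<in> couplings a b"
proof -
  interpret pair_prob_space a b
    using assms by (simp add: pair_prob_space_def pair_sigma_finite_def prob_space_imp_sigma_finite)
  have sets_ab: "sets (a \<Otimes>\<^sub>M b) = sets (borel :: ('a \<times> 'a) measure)"
    using sets_pair_measure_cong[OF assms(3,4)] borel_prod by metis
  have space: "space a = UNIV" "space b = UNIV"
    using assms(3,4) by (metis sets_eq_imp_space_eq space_borel)+
  have "distr (a \<Otimes>\<^sub>M b) borel fst = a"
  proof (rule measure_eqI)
    fix A assume "A \<in> sets (distr (a \<Otimes>\<^sub>M b) borel fst)"
    then have A: "A \<in> sets a"
      using assms(3) by simp
    have "fst -` A \<inter> space (a \<Otimes>\<^sub>M b) = A \<times> space b"
      using space by (auto simp: space_pair_measure)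
    moreover have "emeasure (a \<Otimes>\<^sub>M b) (A \<times> space b) = emeasure a A"
      using M2.emeasure_pair_measure_Times[OF A sets.top] by (simp add: M2.emeasure_space_1)
    ultimately show "emeasure (distr (a \<Otimes>\<^sub>M b) borel fst) A = emeasure a A"
      using A assms(3) measurable_cong_sets[OF sets_ab refl] fst_snd_borel_measurable(1)
      by (simp add: emeasure_distr)
  qed (simp add: assms(3))
  moreover have "distr (a \<Otimes>\<^sub>M b) borel snd = b"
  proof (rule measure_eqI)
    fix B assume "B \<in> sets (distr (a \<Otimes>\<^sub>M b) borel snd)"
    then have B: "B \<in> sets b"
      using assms(4) by simp
    have "snd -` B \<inter> space (a \<Otimes>\<^sub>M b) = space a \<times> B"
      using space by (auto simp: space_pair_measure)
    moreover have "emeasure (a \<Otimes>\<^sub>M b) (space a \<times> B) = emeasure b B"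
      using M2.emeasure_pair_measure_Times[OF sets.top[of a] B] by (simp add: M1.emeasure_space_1)
    ultimately show "emeasure (distr (a \<Otimes>\<^sub>M b) borel snd) B = emeasure b B"
      using B assms(4) measurable_cong_sets[OF sets_ab refl] fst_snd_borel_measurable(2)
      by (simp add: emeasure_distr)
  qed (simp add: assms(4))
  ultimately show ?thesis
    unfolding couplings_def using sets_ab P.prob_space_axioms by simp
qed

lemma metric_nonneg:
  assumes "is_metric_on \<Omega> c" "x \<in> \<Omega>" "y \<in> \<Omega>"
  shows "0 \<le> c x y"
proof -
  have "c x x \<le> c x y + c y x" "c x x = 0" "c y x = c x y"
    using assms unfolding is_metric_on_def by blast+
  then show ?thesis by linarith
qed

lemma metric_powr_le_via_base_points:
  assumes c: "is_metric_on \<Omega> c" and \<Omega>: "x \<in> \<Omega>" "y \<in> \<Omega>" "x0 \<in> \<Omega>" "y0 \<in> \<Omega>" and p: "0 \<le> p"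
  shows "c x y powr p \<le> 3 powr p * (c x x0 powr p + c x0 y0 powr p + c y y0 powr p)"
proof -
  define M where "M = max (c x x0) (max (c x0 y0) (c y y0))"
  have "c x y \<le> c x x0 + c x0 y" "c x0 y \<le> c x0 y0 + c y0 y" "c y0 y = c y y0"
    using c \<Omega> unfolding is_metric_on_def by blast+
  then have "c x y \<le> 3 * M"
    unfolding M_def by linarith
  then have "c x y powr p \<le> (3 * M) powr p"
    using metric_nonneg[OF c] \<Omega> p by (intro powr_mono2) auto
  also have "\<dots> = 3 powr p * M powr p"
    using metric_nonneg[OF c] \<Omega> by (simp add: M_def powr_mult le_max_iff_disj)
  also have "M powr p \<le> c x x0 powr p + c x0 y0 powr p + c y y0 powr p"
    unfolding M_def by (auto simp: max_def)
  finally show ?thesis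
    by simp
qed

lemma cost_integrand_le_moments:
  assumes c: "is_metric_on \<Omega> c" and x0: "x0 \<in> \<Omega>" and y0: "y0 \<in> \<Omega>" and p: "0 \<le> p"
  shows "indicator (\<Omega> \<times> \<Omega>) z * ennreal (c (fst z) (snd z) powr p)
    \<le> ennreal (3 powr p) * (indicator \<Omega> (fst z) * ennreal (c (fst z) x0 powr p)
      + ennreal (c x0 y0 powr p) + indicator \<Omega> (snd z) * ennreal (c (snd z) y0 powr p))"
proof (cases "z \<in> \<Omega> \<times> \<Omega>")
  case True
  then have "c (fst z) (snd z) powr p
      \<le> 3 powr p * (c (fst z) x0 powr p + c x0 y0 powr p + c (snd z) y0 powr p)"
    using metric_powr_le_via_base_points[OF c _ _ x0 y0 p] by auto
  then show ?thesis
    using True by (auto simp: ennreal_mult[symmetric] ennreal_plus[symmetric] simp del: ennreal_plus)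
qed simp

lemma tcost_le_moments:
  fixes \<Omega> :: "'a::second_countable_topology set"
  assumes \<Omega>: "\<Omega> \<in> sets borel"
    and c_meas: "(\<lambda>z. c (fst z) (snd z)) \<in> borel_measurable (restrict_space borel (\<Omega> \<times> \<Omega>))"
    and c: "is_metric_on \<Omega> c" and p: "0 \<le> p"
    and \<gamma>: "\<gamma> \<in> couplings a b" and x0: "x0 \<in> \<Omega>" and y0: "y0 \<in> \<Omega>"
  shows "tcost \<Omega> c p \<gamma> \<le> ennreal (3 powr p) *
    ((\<integral>\<^sup>+x. indicator \<Omega> x * ennreal (c x x0 powr p) \<partial>a) + ennreal (c x0 y0 powr p)
      + (\<integral>\<^sup>+y. indicator \<Omega> y * ennreal (c y y0 powr p) \<partial>b))"
proof -
  define F where "F z0 x = indicator \<Omega> x * ennreal (c x z0 powr p)" for z0 x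
  define V where "V = ennreal (c x0 y0 powr p)"
  have F: "F x0 \<in> borel_measurable borel" "F y0 \<in> borel_measurable borel"
    unfolding F_def using moment_integrand_measurable[OF \<Omega> c_meas] x0 y0 by blast+
  have meas: "(\<lambda>z. F x0 (fst z)) \<in> borel_measurable \<gamma>" "(\<lambda>z. F y0 (snd z)) \<in> borel_measurable \<gamma>"
    using F measurable_compose fst_snd_borel_measurable
    unfolding measurable_cong_sets[OF couplingsD(2)[OF \<gamma>] refl] by blast+
  have "tcost \<Omega> c p \<gamma> \<le> (\<integral>\<^sup>+z. ennreal (3 powr p) * (F x0 (fst z) + V + F y0 (snd z)) \<partial>\<gamma>)"
    unfolding tcost_def F_def V_def by (intro nn_integral_mono cost_integrand_le_moments[OF c x0 y0 p])
  also have "\<dots> = ennreal (3 powr p) * ((\<integral>\<^sup>+z. F x0 (fst z) \<partial>\<gamma>) + V + (\<integral>\<^sup>+z. F y0 (snd z) \<partial>\<gamma>))"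
    using meas prob_space.emeasure_space_1[OF couplingsD(1)[OF \<gamma>]]
    by (simp add: nn_integral_cmult nn_integral_add)
  also have "\<dots> = ennreal (3 powr p) * ((\<integral>\<^sup>+x. F x0 x \<partial>a) + V + (\<integral>\<^sup>+y. F y0 y \<partial>b))"
    using nn_integral_coupling_fst[OF \<gamma> F(1)] nn_integral_coupling_snd[OF \<gamma> F(2)] by simp
  finally show ?thesis
    unfolding F_def V_def .
qed

lemma OTval_less_top:
  fixes \<Omega> :: "'a::second_countable_topology set"
  assumes \<Omega>: "\<Omega> \<in> sets borel"
    and c_meas: "(\<lambda>z. c (fst z) (snd z)) \<in> borel_measurable (restrict_space borel (\<Omega> \<times> \<Omega>))"
    and c: "is_metric_on \<Omega> c" and p: "0 \<le> p"
    and a: "a \<in> Pp \<Omega> c p" and b: "b \<in> Pp \<Omega> c p"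
  shows "OTval \<Omega> c p a b < \<infinity>"
proof -
  obtain x0 where x0: "x0 \<in> \<Omega>" and a_moment: "(\<integral>\<^sup>+x. indicator \<Omega> x * ennreal (c x x0 powr p) \<partial>a) < \<infinity>"
    using a unfolding Pp_def by blast
  obtain y0 where y0: "y0 \<in> \<Omega>" and b_moment: "(\<integral>\<^sup>+y. indicator \<Omega> y * ennreal (c y y0 powr p) \<partial>b) < \<infinity>"
    using b unfolding Pp_def by blast
  have "a \<Otimes>\<^sub>M b \<in> couplings a b"
    using a b by (intro pair_measure_in_couplings) (auto simp: Pp_def prob_on_def)
  then have "OTval \<Omega> c p a b \<le> tcost \<Omega> c p (a \<Otimes>\<^sub>M b)"
    unfolding OTval_def by (rule INF_lower)
  also have "\<dots> \<le> ennreal (3 powr p) *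
    ((\<integral>\<^sup>+x. indicator \<Omega> x * ennreal (c x x0 powr p) \<partial>a) + ennreal (c x0 y0 powr p)
      + (\<integral>\<^sup>+y. indicator \<Omega> y * ennreal (c y y0 powr p) \<partial>b))"
    by (rule tcost_le_moments[OF \<Omega> c_meas c p \<open>a \<Otimes>\<^sub>M b \<in> couplings a b\<close> x0 y0])
  also have "\<dots> < \<infinity>"
    using a_moment b_moment by (simp add: ennreal_mult_less_top less_top)
  finally show ?thesis .
qed

lemma Wp_powr_eq_OTval:
  assumes "OTval \<Omega> c p \<mu> \<nu> < \<infinity>" and "p \<noteq> 0"
  shows "ennreal (Wp \<Omega> c p \<mu> \<nu> powr p) = OTval \<Omega> c p \<mu> \<nu>"
proof -
  have "Wp \<Omega> c p \<mu> \<nu> powr p = enn2real (OTval \<Omega> c p \<mu> \<nu>)"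
    unfolding Wp_def using assms(2)
    by (cases "enn2real (OTval \<Omega> c p \<mu> \<nu>) = 0") (simp_all add: powr_powr)
  then show ?thesis
    using assms(1) by (simp add: less_top)
qed

section \<open>Atom weights and identifiability\<close>

text \<open>A representation \<open>\<Sum>\<^sub>j lam j \<cdot> a j\<close> may list the same atom several times; identifiability
  only determines the total weight \<open>atom_weight\<close> of each atom, and \<open>atom_share\<close> is the fraction
  of that weight carried by one index.\<close>

definition atom_weight :: "(nat \<Rightarrow> real) \<Rightarrow> (nat \<Rightarrow> 'b) \<Rightarrow> nat \<Rightarrow> 'b \<Rightarrow> real" where
  "atom_weight lam a N b = (\<Sum>n<N. if a n = b then lam n else 0)"

definition atom_share :: "(nat \<Rightarrow> real) \<Rightarrow> (nat \<Rightarrow> 'b) \<Rightarrow> nat \<Rightarrow> nat \<Rightarrow> real" where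
  "atom_share lam a N j = lam j / atom_weight lam a N (a j)"

definition atom_support :: "(nat \<Rightarrow> real) \<Rightarrow> (nat \<Rightarrow> 'b) \<Rightarrow> nat \<Rightarrow> 'b set" where
  "atom_support lam a N = {a j | j. j < N \<and> 0 < lam j}"

lemma finite_atom_support: "finite (atom_support lam a N)"
proof -
  have "atom_support lam a N \<subseteq> a ` {..<N}"
    unfolding atom_support_def by blast
  then show ?thesis
    by (rule finite_subset) simp
qed

lemma atom_weight_nonneg: "(\<And>n. n < N \<Longrightarrow> 0 \<le> lam n) \<Longrightarrow> 0 \<le> atom_weight lam a N b"
  unfolding atom_weight_def by (intro sum_nonneg) auto

lemma atom_weight_ge:
  assumes "\<And>n. n < N \<Longrightarrow> 0 \<le> lam n" and "j < N"
  shows "lam j \<le> atom_weight lam a N (a j)"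
proof -
  have "lam j = (if a j = a j then lam j else 0)"
    by simp
  also have "\<dots> \<le> atom_weight lam a N (a j)"
    unfolding atom_weight_def using assms by (intro member_le_sum) auto
  finally show ?thesis .
qed

lemma atom_weight_pos:
  assumes "\<And>n. n < N \<Longrightarrow> 0 \<le> lam n" and "b \<in> atom_support lam a N"
  shows "0 < atom_weight lam a N b"
proof -
  obtain j where j: "j < N" "0 < lam j" "a j = b"
    using assms(2) unfolding atom_support_def by auto
  have "lam j \<le> atom_weight lam a N (a j)"
    by (rule atom_weight_ge[OF assms(1) j(1)])
  then show ?thesis
    using j(2,3) by simp
qed

lemma atom_weight_eq_0:
  assumes "\<And>n. n < N \<Longrightarrow> 0 \<le> lam n" and "b \<notin> atom_support lam a N"
  shows "atom_weight lam a N b = 0"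
proof -
  have "(if a j = b then lam j else 0) = 0" if "j < N" for j
    using assms that by (cases "a j = b") (auto simp: atom_support_def order_le_less)
  then show ?thesis
    unfolding atom_weight_def by (intro sum.neutral) simp
qed

lemma sum_by_atom_support:
  assumes "\<And>n. n < N \<Longrightarrow> 0 \<le> lam n"
  shows "(\<Sum>j<N. lam j * f (a j)) = (\<Sum>b\<in>atom_support lam a N. atom_weight lam a N b * f b)"
proof -
  have "(\<Sum>b\<in>atom_support lam a N. atom_weight lam a N b * f b)
      = (\<Sum>j<N. \<Sum>b\<in>atom_support lam a N. if a j = b then lam j * f b else 0)"
    unfolding atom_weight_def by (subst sum.swap) (auto simp: sum_distrib_right intro!: sum.cong)
  also have "\<dots> = (\<Sum>j<N. if a j \<in> atom_support lam a N then lam j * f (a j) else 0)"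
    by (simp add: sum.delta finite_atom_support)
  also have "\<dots> = (\<Sum>j<N. lam j * f (a j))"
    using assms by (intro sum.cong refl) (auto simp: atom_support_def order_le_less)
  finally show ?thesis ..
qed

lemma atom_weight_prob_simplex:
  "lam \<in> prob_simplex {..<N} \<Longrightarrow> atom_weight lam a N \<in> prob_simplex (atom_support lam a N)"
  using sum_by_atom_support[of N lam "\<lambda>_. 1" a]
  by (simp add: prob_simplex_def atom_weight_nonneg)

lemma atom_share_nonneg:
  assumes "\<And>n. n < N \<Longrightarrow> 0 \<le> lam n" and "j < N"
  shows "0 \<le> atom_share lam a N j"
  unfolding atom_share_def using assms by (simp add: atom_weight_nonneg)

lemma atom_share_mult_atom_weight:
  assumes "\<And>n. n < N \<Longrightarrow> 0 \<le> lam n" and "j < N"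
  shows "atom_share lam a N j * atom_weight lam a N (a j) = lam j"
  using atom_weight_ge[of N lam j a] assms(1)[OF assms(2)] assms unfolding atom_share_def
  by (cases "atom_weight lam a N (a j) = 0") auto

lemma sum_atom_share_redistribute:
  assumes "\<And>n. n < M \<Longrightarrow> f n \<noteq> 0 \<Longrightarrow> atom_weight lam a N (b n) \<noteq> 0"
  shows "(\<Sum>j<N. atom_share lam a N j * (\<Sum>n<M. if b n = a j then f n else 0)) = (\<Sum>n<M. f n)"
proof -
  have "(\<Sum>j<N. atom_share lam a N j * (\<Sum>n<M. if b n = a j then f n else 0))
      = (\<Sum>n<M. \<Sum>j<N. (if a j = b n then lam j else 0) * (f n / atom_weight lam a N (b n)))"
    unfolding atom_share_def by (subst sum.swap) (auto simp: sum_distrib_left intro!: sum.cong)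
  also have "\<dots> = (\<Sum>n<M. atom_weight lam a N (b n) * (f n / atom_weight lam a N (b n)))"
    unfolding atom_weight_def by (simp only: sum_distrib_right)
  also have "\<dots> = (\<Sum>n<M. f n)"
    using assms by (intro sum.cong refl) fastforce
  finally show ?thesis .
qed

lemma mix_eq_mix_atom_support:
  fixes a :: "nat \<Rightarrow> 'b::topological_space measure"
  assumes nonneg: "\<And>j. j < J \<Longrightarrow> 0 \<le> lam j"
    and a: "\<And>j. j < J \<Longrightarrow> prob_space (a j) \<and> sets (a j) = sets borel"
  shows "mix {..<J} lam a = mix (atom_support lam a J) (atom_weight lam a J) (\<lambda>b. b)"
proof (rule mix_eqI)
  fix A :: "'b set" assume A: "A \<in> sets borel"
  have support: "b \<in> atom_support lam a J \<Longrightarrow> prob_space b \<and> sets b = sets borel" for b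
    using a by (auto simp: atom_support_def)
  have "emeasure (mix {..<J} lam a) A = ennreal (\<Sum>j<J. lam j * measure (a j) A)"
    using a nonneg A by (intro emeasure_mix_eq_sum_measure) auto
  also have "\<dots> = ennreal (\<Sum>b\<in>atom_support lam a J. atom_weight lam a J b * measure b A)"
    using sum_by_atom_support[OF nonneg, where f = "\<lambda>b. measure b A" and a = a] by simp
  also have "\<dots> = emeasure (mix (atom_support lam a J) (atom_weight lam a J) (\<lambda>b. b)) A"
    using support nonneg A finite_atom_support
    by (intro emeasure_mix_eq_sum_measure[symmetric]) (auto simp: atom_weight_nonneg)
  finally show "emeasure (mix {..<J} lam a) A
      = emeasure (mix (atom_support lam a J) (atom_weight lam a J) (\<lambda>b. b)) A" .
qed

lemma distinct_atom_representation:
  fixes a :: "nat \<Rightarrow> 'b::topological_space measure"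
  assumes lam: "lam \<in> prob_simplex {..<J}"
    and a: "\<And>j. j < J \<Longrightarrow> prob_space (a j) \<and> sets (a j) = sets borel"
  obtains n :: nat and e where "0 < n" and "bij_betw e {..<n} (atom_support lam a J)"
    and "(\<lambda>i. atom_weight lam a J (e i)) \<in> prob_simplex {..<n}"
    and "\<And>i. i < n \<Longrightarrow> 0 < atom_weight lam a J (e i)"
    and "mix {..<J} lam a = mix {..<n} (\<lambda>i. atom_weight lam a J (e i)) e"
proof -
  let ?S = "atom_support lam a J"
  have nonneg: "\<And>j. j < J \<Longrightarrow> 0 \<le> lam j"
    using lam by (simp add: prob_simplex_def)
  obtain e where e: "bij_betw e {..<card ?S} ?S"
    using ex_bij_betw_nat_finite[OF finite_atom_support[of lam a J]] by (auto simp: atLeast0LessThan)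
  have "(\<Sum>i<card ?S. atom_weight lam a J (e i)) = (\<Sum>b\<in>?S. atom_weight lam a J b)"
    by (rule sum.reindex_bij_betw[OF e])
  then have weights: "(\<lambda>i. atom_weight lam a J (e i)) \<in> prob_simplex {..<card ?S}"
    using atom_weight_prob_simplex[OF lam, of a] bij_betwE[OF e] by (simp add: prob_simplex_def)
  have "0 < card ?S"
    using prob_simplex_nonempty[OF weights] by (simp add: lessThan_empty_iff)
  moreover have "0 < atom_weight lam a J (e i)" if "i < card ?S" for i
    using bij_betwE[OF e] that by (intro atom_weight_pos nonneg) auto
  moreover have "mix {..<J} lam a = mix {..<card ?S} (\<lambda>i. atom_weight lam a J (e i)) e"
    using mix_eq_mix_atom_support[where lam = lam and a = a, OF nonneg a]
      mix_reindex[OF e, of "atom_weight lam a J" "\<lambda>b. b"] by (simp add: comp_def)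
  ultimately show ?thesis
    using e weights that by blast
qed

lemma identifiable_weights_eq:
  fixes e e' :: "nat \<Rightarrow> 'b::topological_space measure"
  assumes ident: "identifiable \<A>" and "S \<subseteq> \<A>" and "S' \<subseteq> \<A>"
    and n: "0 < n" and e: "bij_betw e {..<n} S"
    and W: "(\<lambda>i. W (e i)) \<in> prob_simplex {..<n}" "\<And>i. i < n \<Longrightarrow> 0 < W (e i)"
    and n': "0 < n'" and e': "bij_betw e' {..<n'} S'"
    and W': "(\<lambda>i. W' (e' i)) \<in> prob_simplex {..<n'}" "\<And>i. i < n' \<Longrightarrow> 0 < W' (e' i)"
    and eq: "mix {..<n} (\<lambda>i. W (e i)) e = mix {..<n'} (\<lambda>i. W' (e' i)) e'"
  shows "S' = S" and "\<And>b. b \<in> S' \<Longrightarrow> W b = W' b"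
proof -
  have "\<forall>i<n. e i \<in> \<A>" "\<forall>i<n'. e' i \<in> \<A>"
    using bij_betwE[OF e] bij_betwE[OF e'] assms(2,3) by auto
  then have "n = n' \<and> (\<exists>\<sigma>. \<sigma> permutes {..<n'} \<and> (\<forall>k<n'. W (e (\<sigma> k)) = W' (e' k) \<and> e (\<sigma> k) = e' k))"
    using n n' e e' W W' eq
    by (intro ident[unfolded identifiable_def, rule_format, of n n' "\<lambda>i. W (e i)" e "\<lambda>i. W' (e' i)" e',
          simplified]) (auto simp: bij_betw_def)
  then obtain \<sigma> where nn': "n' = n" and \<sigma>: "\<sigma> permutes {..<n}"
    and matched: "\<And>k. k < n \<Longrightarrow> W (e (\<sigma> k)) = W' (e' k) \<and> e (\<sigma> k) = e' k"
    by auto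
  have "S' = e ` \<sigma> ` {..<n}"
    using matched e' nn' by (auto simp: bij_betw_def image_image intro!: image_cong)
  then show "S' = S"
    using e by (simp add: permutes_image[OF \<sigma>] bij_betw_def)
  show "W b = W' b" if b: "b \<in> S'" for b
  proof -
    obtain k where "k < n" "b = e' k"
      using e' nn' b by (auto simp: bij_betw_def)
    then show ?thesis
      using matched[of k] by metis
  qed
qed

lemma identifiable_atom_weight_eq:
  fixes a a' :: "nat \<Rightarrow> 'b::topological_space measure"
  assumes ident: "identifiable \<A>"
    and \<A>: "\<And>x. x \<in> \<A> \<Longrightarrow> prob_space x \<and> sets x = sets borel"
    and lam: "lam \<in> prob_simplex {..<J}" and a: "\<And>j. j < J \<Longrightarrow> a j \<in> \<A>"
    and lam': "lam' \<in> prob_simplex {..<K}" and a': "\<And>k. k < K \<Longrightarrow> a' k \<in> \<A>"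
    and eq: "mix {..<J} lam a = mix {..<K} lam' a'"
  shows "atom_weight lam a J = atom_weight lam' a' K"
proof
  fix b
  let ?S = "atom_support lam a J" and ?S' = "atom_support lam' a' K"
  have a_prob: "\<And>j. j < J \<Longrightarrow> prob_space (a j) \<and> sets (a j) = sets borel"
    and a'_prob: "\<And>k. k < K \<Longrightarrow> prob_space (a' k) \<and> sets (a' k) = sets borel"
    using \<A> a a' by auto
  obtain n :: nat and e where n: "0 < n" and e: "bij_betw e {..<n} ?S"
    and w: "(\<lambda>i. atom_weight lam a J (e i)) \<in> prob_simplex {..<n}" "\<And>i. i < n \<Longrightarrow> 0 < atom_weight lam a J (e i)"
    and mix_e: "mix {..<J} lam a = mix {..<n} (\<lambda>i. atom_weight lam a J (e i)) e"
    by (rule distinct_atom_representation[where a = a, OF lam a_prob]) (simp, rule that)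
  obtain n' :: nat and e' where n': "0 < n'" and e': "bij_betw e' {..<n'} ?S'"
    and w': "(\<lambda>i. atom_weight lam' a' K (e' i)) \<in> prob_simplex {..<n'}" "\<And>i. i < n' \<Longrightarrow> 0 < atom_weight lam' a' K (e' i)"
    and mix_e': "mix {..<K} lam' a' = mix {..<n'} (\<lambda>i. atom_weight lam' a' K (e' i)) e'"
    by (rule distinct_atom_representation[where a = a', OF lam' a'_prob]) (simp, rule that)
  have supports: "?S \<subseteq> \<A>" "?S' \<subseteq> \<A>"
    using a a' by (auto simp: atom_support_def)
  have "mix {..<n} (\<lambda>i. atom_weight lam a J (e i)) e = mix {..<n'} (\<lambda>i. atom_weight lam' a' K (e' i)) e'"
    using mix_e mix_e' eq by simp
  note same = identifiable_weights_eq[OF ident supports n e w n' e' w' this]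
  then show "atom_weight lam a J b = atom_weight lam' a' K b"
    using lam lam' by (cases "b \<in> ?S'") (simp_all add: atom_weight_eq_0 prob_simplex_def)
qed

section \<open>Discrete plans and glued plans\<close>

lemma Gam_mixE:
  assumes "\<gamma> \<in> Gam_mix \<A> G"
  obtains N :: nat and \<nu> \<gamma>s b0 b1 where "\<nu> \<in> prob_simplex {..<N}"
    and "\<forall>n<N. b0 n \<in> \<A> \<and> b1 n \<in> \<A> \<and> \<gamma>s n \<in> G (b0 n) (b1 n)" and "\<gamma> = mix {..<N} \<nu> \<gamma>s"
proof -
  obtain N :: nat and \<nu> \<gamma>s where \<nu>: "\<nu> \<in> prob_simplex {..<N}" and \<gamma>s: "\<forall>n<N. \<gamma>s n \<in> Gam_all \<A> G"
    and \<gamma>_eq: "\<gamma> = mix {..<N} \<nu> \<gamma>s"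
    using assms unfolding Gam_mix_def mixtures_def by auto
  have "\<forall>n\<in>{..<N}. \<exists>b. b \<in> \<A> \<times> \<A> \<and> \<gamma>s n \<in> G (fst b) (snd b)"
    using \<gamma>s unfolding Gam_all_def by fastforce
  from bchoice[OF this] obtain b where "\<forall>n\<in>{..<N}. b n \<in> \<A> \<times> \<A> \<and> \<gamma>s n \<in> G (fst (b n)) (snd (b n))"
    by blast
  then show ?thesis
    using that[OF \<nu> _ \<gamma>_eq, of "fst \<circ> b" "snd \<circ> b"] by (auto simp: mem_Times_iff)
qed

lemma disc_cost_nonneg:
  "w \<in> disc_plans J K lam0 lam1 \<Longrightarrow> 0 \<le> disc_cost \<Omega> c p J K a0 a1 w"
  unfolding disc_cost_def disc_plans_def by (auto intro!: sum_nonneg)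

lemma disc_minimizersI:
  assumes w: "w \<in> disc_plans J K lam0 lam1"
    and le: "disc_cost \<Omega> c p J K a0 a1 w \<le> Inf (disc_cost \<Omega> c p J K a0 a1 ` disc_plans J K lam0 lam1)"
  shows "w \<in> disc_minimizers \<Omega> c p J K lam0 a0 lam1 a1"
proof -
  have "bdd_below (disc_cost \<Omega> c p J K a0 a1 ` disc_plans J K lam0 lam1)"
    unfolding bdd_below_def by (auto intro!: exI[of _ 0] simp: disc_cost_nonneg)
  then have "Inf (disc_cost \<Omega> c p J K a0 a1 ` disc_plans J K lam0 lam1) \<le> disc_cost \<Omega> c p J K a0 a1 w"
    using w by (intro cInf_lower) auto
  then show ?thesis
    using w le unfolding disc_minimizers_def by simp
qed

definition glued_plan ::
    "nat \<Rightarrow> nat \<Rightarrow> (nat \<Rightarrow> nat \<Rightarrow> real) \<Rightarrow> (nat \<Rightarrow> nat \<Rightarrow> 'b::topological_space measure) \<Rightarrow> 'b measure" where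
  "glued_plan J K w g = mix ({..<J} \<times> {..<K}) (\<lambda>(j, k). w j k) (\<lambda>(j, k). g j k)"

lemma disc_plan_prob_simplex:
  assumes w: "w \<in> disc_plans J K lam0 lam1" and lam0: "lam0 \<in> prob_simplex {..<J}"
  shows "(\<lambda>(j, k). w j k) \<in> prob_simplex ({..<J} \<times> {..<K})"
proof -
  have "(\<Sum>(j, k)\<in>{..<J} \<times> {..<K}. w j k) = (\<Sum>j<J. lam0 j)"
    using w by (simp add: disc_plans_def flip: sum.cartesian_product)
  then show ?thesis
    using w lam0 by (auto simp: prob_simplex_def disc_plans_def)
qed

lemma disc_plans_product:
  assumes "lam0 \<in> prob_simplex {..<J}" and "lam1 \<in> prob_simplex {..<K}"
  shows "(\<lambda>j k. lam0 j * lam1 k) \<in> disc_plans J K lam0 lam1"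
  using assms unfolding disc_plans_def prob_simplex_def
  by (simp add: sum_distrib_left[symmetric] sum_distrib_right[symmetric])

locale mixture_transport =
  fixes \<Omega> :: "'a::second_countable_topology set"
    and c :: "'a \<Rightarrow> 'a \<Rightarrow> real"
    and p :: real
    and \<A> :: "'a measure set"
    and G :: "'a measure \<Rightarrow> 'a measure \<Rightarrow> ('a \<times> 'a) measure set"
  assumes Omega_borel: "\<Omega> \<in> sets borel"
    and p_pos: "0 < p"
    and c_metric: "is_metric_on \<Omega> c"
    and c_meas: "(\<lambda>z. c (fst z) (snd z)) \<in> borel_measurable (restrict_space borel (\<Omega> \<times> \<Omega>))"
    and A_sub: "\<A> \<subseteq> Pp \<Omega> c p"
    and opt_exists: "\<forall>b0\<in>\<A>. \<forall>b1\<in>\<A>. opt_plans \<Omega> c p b0 b1 \<noteq> {}"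
    and adm: "admissible \<Omega> c p \<A> G"
begin

lemma atom_prob: "x \<in> \<A> \<Longrightarrow> prob_space x \<and> sets x = sets borel"
  using A_sub unfolding Pp_def prob_on_def by auto

lemma opt_plans_subset_G: "x \<in> \<A> \<Longrightarrow> y \<in> \<A> \<Longrightarrow> opt_plans \<Omega> c p x y \<subseteq> G x y"
  using adm unfolding admissible_def by blast

lemma G_subset_couplings: "x \<in> \<A> \<Longrightarrow> y \<in> \<A> \<Longrightarrow> G x y \<subseteq> couplings x y"
  using adm unfolding admissible_def by blast

lemma some_opt_plan: "x \<in> \<A> \<Longrightarrow> y \<in> \<A> \<Longrightarrow> (SOME \<gamma>. \<gamma> \<in> opt_plans \<Omega> c p x y) \<in> opt_plans \<Omega> c p x y"
  using opt_exists by (simp add: some_in_eq)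

lemma Wp_powr_eq_OTval_atoms:
  assumes "x \<in> \<A>" "y \<in> \<A>"
  shows "ennreal (Wp \<Omega> c p x y powr p) = OTval \<Omega> c p x y"
  using assms A_sub p_pos
  by (intro Wp_powr_eq_OTval OTval_less_top[OF Omega_borel c_meas c_metric]) auto

lemma opt_plans_mix:
  assumes "finite I" and w: "w \<in> prob_simplex I" and \<gamma>: "\<And>i. i \<in> I \<Longrightarrow> \<gamma> i \<in> opt_plans \<Omega> c p x y"
    and x: "x \<in> \<A>" and y: "y \<in> \<A>"
  shows "mix I w \<gamma> \<in> opt_plans \<Omega> c p x y"
proof -
  have coupling: "\<And>i. i \<in> I \<Longrightarrow> \<gamma> i \<in> couplings x y"
    using \<gamma> unfolding opt_plans_def by blast
  have "tcost \<Omega> c p (mix I w \<gamma>) = (\<Sum>i\<in>I. ennreal (w i) * tcost \<Omega> c p (\<gamma> i))"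
    using couplingsD(2)[OF coupling] by (intro tcost_mix[OF Omega_borel c_meas assms(1)])
  also have "\<dots> = (\<Sum>i\<in>I. ennreal (w i)) * OTval \<Omega> c p x y"
    using \<gamma> by (simp add: opt_plans_def sum_distrib_right)
  also have "(\<Sum>i\<in>I. ennreal (w i)) = 1"
    using w by (subst sum_ennreal) (auto simp: prob_simplex_def)
  finally show ?thesis
    using mix_in_couplings_const[OF assms(1) w coupling] atom_prob[OF x] atom_prob[OF y]
    by (simp add: opt_plans_def)
qed

end

locale mixture_pair = mixture_transport +
  fixes J K :: nat
    and lam0 lam1 :: "nat \<Rightarrow> real"
    and a0 a1 :: "nat \<Rightarrow> 'a::second_countable_topology measure"
  assumes lam0: "lam0 \<in> prob_simplex {..<J}" and a0: "\<And>j. j < J \<Longrightarrow> a0 j \<in> \<A>"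
    and lam1: "lam1 \<in> prob_simplex {..<K}" and a1: "\<And>k. k < K \<Longrightarrow> a1 k \<in> \<A>"
begin

lemma lam0_nonneg: "j < J \<Longrightarrow> 0 \<le> lam0 j"
  using lam0 by (simp add: prob_simplex_def)

lemma lam1_nonneg: "k < K \<Longrightarrow> 0 \<le> lam1 k"
  using lam1 by (simp add: prob_simplex_def)

lemma glued_plan_admissible:
  assumes w: "w \<in> disc_plans J K lam0 lam1" and g: "\<And>j k. j < J \<Longrightarrow> k < K \<Longrightarrow> g j k \<in> G (a0 j) (a1 k)"
  shows "glued_plan J K w g \<in> couplings (mix {..<J} lam0 a0) (mix {..<K} lam1 a1) \<inter> Gam_mix \<A> G"
proof -
  let ?I = "{..<J} \<times> {..<K}" and ?w = "\<lambda>(j, k). w j k"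
  have W: "?w \<in> prob_simplex ?I"
    by (rule disc_plan_prob_simplex[OF w lam0])
  have nonneg: "\<And>j k. j \<in> {..<J} \<Longrightarrow> k \<in> {..<K} \<Longrightarrow> 0 \<le> w j k"
    using w by (simp add: disc_plans_def)
  have marginal0: "mix ?I ?w (\<lambda>(j, k). a0 j) = mix {..<J} lam0 a0"
    using w by (simp only: mix_product_fst[OF nonneg]) (auto simp: disc_plans_def intro!: mix_cong)
  have marginal1: "mix ?I ?w (\<lambda>(j, k). a1 k) = mix {..<K} lam1 a1"
    using w by (simp only: mix_product_snd[OF nonneg]) (auto simp: disc_plans_def intro!: mix_cong)
  have "g j k \<in> couplings (a0 j) (a1 k)" if "j < J" "k < K" for j k
    by (rule subsetD[OF G_subset_couplings[OF a0 a1] g]) (use that in simp_all)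
  then have "glued_plan J K w g \<in> couplings (mix ?I ?w (\<lambda>(j, k). a0 j)) (mix ?I ?w (\<lambda>(j, k). a1 k))"
    unfolding glued_plan_def by (intro mix_in_couplings[OF _ W]) auto
  moreover have "g j k \<in> Gam_all \<A> G" if "j < J" "k < K" for j k
    unfolding Gam_all_def using g[OF that] a0[OF that(1)] a1[OF that(2)] by blast
  then have "glued_plan J K w g \<in> Gam_mix \<A> G"
    unfolding glued_plan_def Gam_mix_def by (intro mix_in_mixtures[OF _ W]) auto
  ultimately show ?thesis
    using marginal0 marginal1 by simp
qed

lemma glued_optimal_plan_admissible:
  assumes w: "w \<in> disc_plans J K lam0 lam1"
    and g: "\<And>j k. j < J \<Longrightarrow> k < K \<Longrightarrow> g j k \<in> opt_plans \<Omega> c p (a0 j) (a1 k)"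
  shows "glued_plan J K w g \<in> couplings (mix {..<J} lam0 a0) (mix {..<K} lam1 a1) \<inter> Gam_mix \<A> G"
  using g opt_plans_subset_G[OF a0 a1] by (intro glued_plan_admissible[OF w]) blast

lemma tcost_glued_plan:
  assumes w: "w \<in> disc_plans J K lam0 lam1"
    and g: "\<And>j k. j < J \<Longrightarrow> k < K \<Longrightarrow> g j k \<in> opt_plans \<Omega> c p (a0 j) (a1 k)"
  shows "tcost \<Omega> c p (glued_plan J K w g) = ennreal (disc_cost \<Omega> c p J K a0 a1 w)"
proof -
  have nonneg: "\<And>j k. j < J \<Longrightarrow> k < K \<Longrightarrow> 0 \<le> w j k"
    using w by (simp add: disc_plans_def)
  have "\<And>j k. j < J \<Longrightarrow> k < K \<Longrightarrow> sets (g j k) = sets borel"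
    using g by (auto simp: opt_plans_def couplings_def)
  then have "tcost \<Omega> c p (glued_plan J K w g)
      = (\<Sum>(j, k)\<in>{..<J} \<times> {..<K}. ennreal (w j k) * tcost \<Omega> c p (g j k))"
    unfolding glued_plan_def by (subst tcost_mix[OF Omega_borel c_meas]) (auto simp: case_prod_beta)
  also have "\<dots> = (\<Sum>j<J. \<Sum>k<K. ennreal (w j k * Wp \<Omega> c p (a0 j) (a1 k) powr p))"
    using g nonneg a0 a1
    by (auto simp: sum.cartesian_product[symmetric] opt_plans_def Wp_powr_eq_OTval_atoms ennreal_mult
        intro!: sum.cong)
  also have "\<dots> = (\<Sum>j<J. ennreal (\<Sum>k<K. w j k * Wp \<Omega> c p (a0 j) (a1 k) powr p))"
    using nonneg by (intro sum.cong refl sum_ennreal) simp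
  also have "\<dots> = ennreal (disc_cost \<Omega> c p J K a0 a1 w)"
    unfolding disc_cost_def using nonneg by (intro sum_ennreal sum_nonneg) simp
  finally show ?thesis .
qed

end

section \<open>Decomposition of admissible plans\<close>

locale plan_decomposition = mixture_pair +
  fixes N :: nat
    and \<nu> :: "nat \<Rightarrow> real"
    and \<gamma>s :: "nat \<Rightarrow> ('a::second_countable_topology \<times> 'a) measure"
    and b0 b1 :: "nat \<Rightarrow> 'a measure"
  assumes ident: "identifiable \<A>"
    and \<nu>: "\<nu> \<in> prob_simplex {..<N}"
    and b0: "\<And>n. n < N \<Longrightarrow> b0 n \<in> \<A>" and b1: "\<And>n. n < N \<Longrightarrow> b1 n \<in> \<A>"
    and \<gamma>s: "\<And>n. n < N \<Longrightarrow> \<gamma>s n \<in> G (b0 n) (b1 n)"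
    and marginal0: "mix {..<N} \<nu> b0 = mix {..<J} lam0 a0"
    and marginal1: "mix {..<N} \<nu> b1 = mix {..<K} lam1 a1"
begin

definition block :: "nat \<Rightarrow> nat \<Rightarrow> nat set" where
  "block j k = {n. n < N \<and> 0 < \<nu> n \<and> b0 n = a0 j \<and> b1 n = a1 k}"

text \<open>The mass of block \<open>(j, k)\<close> is shared among the indices representing the atoms
  \<open>a0 j\<close> and \<open>a1 k\<close> in proportion to their weights.\<close>
definition induced_plan :: "nat \<Rightarrow> nat \<Rightarrow> real" where
  "induced_plan j k = atom_share lam0 a0 J j * atom_share lam1 a1 K k * sum \<nu> (block j k)"

text \<open>An empty block has weight \<open>0\<close> in the induced plan, so any optimal plan may stand in for it.\<close>
definition block_plan :: "nat \<Rightarrow> nat \<Rightarrow> ('a \<times> 'a) measure" where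
  "block_plan j k = (if block j k = {} then SOME \<gamma>. \<gamma> \<in> opt_plans \<Omega> c p (a0 j) (a1 k)
     else mix (block j k) (\<lambda>n. \<nu> n / sum \<nu> (block j k)) \<gamma>s)"

lemma \<nu>_nonneg: "n < N \<Longrightarrow> 0 \<le> \<nu> n"
  using \<nu> by (simp add: prob_simplex_def)

lemma \<gamma>s_couplings: "n < N \<Longrightarrow> \<gamma>s n \<in> couplings (b0 n) (b1 n)"
  by (rule subsetD[OF G_subset_couplings[OF b0 b1] \<gamma>s])

lemma finite_block: "finite (block j k)"
  by (rule finite_subset[of _ "{..<N}"]) (auto simp: block_def)

lemma sum_block:
  "(\<Sum>n\<in>block j k. \<nu> n * h n) = (\<Sum>n<N. if b0 n = a0 j \<and> b1 n = a1 k then \<nu> n * h n else 0)"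
proof -
  have "block j k = {n \<in> {..<N}. 0 < \<nu> n \<and> b0 n = a0 j \<and> b1 n = a1 k}"
    by (auto simp: block_def)
  then have "(\<Sum>n\<in>block j k. \<nu> n * h n)
      = (\<Sum>n<N. if 0 < \<nu> n \<and> b0 n = a0 j \<and> b1 n = a1 k then \<nu> n * h n else 0)"
    by (simp only: sum.inter_filter[OF finite_lessThan])
  also have "\<dots> = (\<Sum>n<N. if b0 n = a0 j \<and> b1 n = a1 k then \<nu> n * h n else 0)"
    using \<nu>_nonneg by (intro sum.cong refl) (auto simp: order_le_less)
  finally show ?thesis .
qed

lemma atom_weight_marginal0: "atom_weight \<nu> b0 N = atom_weight lam0 a0 J"
  using identifiable_atom_weight_eq[OF ident atom_prob \<nu> b0 lam0 a0 marginal0] by simp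

lemma atom_weight_marginal1: "atom_weight \<nu> b1 N = atom_weight lam1 a1 K"
  using identifiable_atom_weight_eq[OF ident atom_prob \<nu> b1 lam1 a1 marginal1] by simp

lemma atom_weight_b0_pos: "n < N \<Longrightarrow> \<nu> n \<noteq> 0 \<Longrightarrow> atom_weight lam0 a0 J (b0 n) \<noteq> 0"
  using atom_weight_ge[of N \<nu> n b0] \<nu>_nonneg[of n] atom_weight_marginal0 \<nu>_nonneg by force

lemma atom_weight_b1_pos: "n < N \<Longrightarrow> \<nu> n \<noteq> 0 \<Longrightarrow> atom_weight lam1 a1 K (b1 n) \<noteq> 0"
  using atom_weight_ge[of N \<nu> n b1] \<nu>_nonneg[of n] atom_weight_marginal1 \<nu>_nonneg by force

lemma sum_share1_blocks:
  "(\<Sum>k<K. atom_share lam1 a1 K k * (\<Sum>n\<in>block j k. \<nu> n * h n))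
    = (\<Sum>n<N. if b0 n = a0 j then \<nu> n * h n else 0)"
proof -
  have "(\<Sum>n\<in>block j k. \<nu> n * h n) = (\<Sum>n<N. if b1 n = a1 k then (if b0 n = a0 j then \<nu> n * h n else 0) else 0)" for k
    unfolding sum_block by (intro sum.cong) auto
  then show ?thesis
    using atom_weight_b1_pos by (simp only:) (rule sum_atom_share_redistribute, auto split: if_splits)
qed

lemma sum_share0_blocks:
  "(\<Sum>j<J. atom_share lam0 a0 J j * (\<Sum>n\<in>block j k. \<nu> n * h n))
    = (\<Sum>n<N. if b1 n = a1 k then \<nu> n * h n else 0)"
proof -
  have "(\<Sum>n\<in>block j k. \<nu> n * h n) = (\<Sum>n<N. if b0 n = a0 j then (if b1 n = a1 k then \<nu> n * h n else 0) else 0)" for j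
    unfolding sum_block by (intro sum.cong) auto
  then show ?thesis
    using atom_weight_b0_pos by (simp only:) (rule sum_atom_share_redistribute, auto split: if_splits)
qed

lemma sum_blocks:
  "(\<Sum>j<J. \<Sum>k<K. atom_share lam0 a0 J j * atom_share lam1 a1 K k * (\<Sum>n\<in>block j k. \<nu> n * h n))
    = (\<Sum>n<N. \<nu> n * h n)"
proof -
  have "(\<Sum>j<J. \<Sum>k<K. atom_share lam0 a0 J j * atom_share lam1 a1 K k * (\<Sum>n\<in>block j k. \<nu> n * h n))
      = (\<Sum>j<J. atom_share lam0 a0 J j * (\<Sum>n<N. if b0 n = a0 j then \<nu> n * h n else 0))"
    by (simp add: mult.assoc sum_distrib_left sum_share1_blocks flip: sum_distrib_left)
  also have "\<dots> = (\<Sum>n<N. \<nu> n * h n)"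
    using atom_weight_b0_pos by (intro sum_atom_share_redistribute) auto
  finally show ?thesis .
qed


lemma sum_induced_plan_row:
  assumes "j < J"
  shows "(\<Sum>k<K. induced_plan j k) = lam0 j"
proof -
  have "(\<Sum>k<K. induced_plan j k)
      = atom_share lam0 a0 J j * (\<Sum>k<K. atom_share lam1 a1 K k * (\<Sum>n\<in>block j k. \<nu> n * 1))"
    unfolding induced_plan_def by (simp add: sum_distrib_left mult.assoc)
  also have "\<dots> = atom_share lam0 a0 J j * atom_weight \<nu> b0 N (a0 j)"
    unfolding sum_share1_blocks by (simp add: atom_weight_def cong: if_cong)
  also have "\<dots> = lam0 j"
    unfolding atom_weight_marginal0 using lam0_nonneg assms by (rule atom_share_mult_atom_weight)
  finally show ?thesis .
qed

lemma sum_induced_plan_col: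
  assumes "k < K"
  shows "(\<Sum>j<J. induced_plan j k) = lam1 k"
proof -
  have "(\<Sum>j<J. induced_plan j k)
      = atom_share lam1 a1 K k * (\<Sum>j<J. atom_share lam0 a0 J j * (\<Sum>n\<in>block j k. \<nu> n * 1))"
    unfolding induced_plan_def by (simp add: sum_distrib_left mult_ac)
  also have "\<dots> = atom_share lam1 a1 K k * atom_weight \<nu> b1 N (a1 k)"
    unfolding sum_share0_blocks by (simp add: atom_weight_def cong: if_cong)
  also have "\<dots> = lam1 k"
    unfolding atom_weight_marginal1 using lam1_nonneg assms by (rule atom_share_mult_atom_weight)
  finally show ?thesis .
qed

lemma induced_plan_in_disc_plans: "induced_plan \<in> disc_plans J K lam0 lam1"
proof -
  have "0 \<le> induced_plan j k" if "j < J" "k < K" for j k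
    unfolding induced_plan_def using lam0_nonneg lam1_nonneg \<nu>_nonneg that
    by (intro mult_nonneg_nonneg sum_nonneg atom_share_nonneg) (auto simp: block_def)
  then show ?thesis
    unfolding disc_plans_def using sum_induced_plan_row sum_induced_plan_col by simp
qed

lemma disc_cost_induced_plan:
  "disc_cost \<Omega> c p J K a0 a1 induced_plan = (\<Sum>n<N. \<nu> n * Wp \<Omega> c p (b0 n) (b1 n) powr p)"
proof -
  have "induced_plan j k * Wp \<Omega> c p (a0 j) (a1 k) powr p
      = atom_share lam0 a0 J j * atom_share lam1 a1 K k
        * (\<Sum>n\<in>block j k. \<nu> n * Wp \<Omega> c p (b0 n) (b1 n) powr p)" for j k
    unfolding induced_plan_def by (simp add: sum_distrib_right block_def)
  then show ?thesis
    unfolding disc_cost_def using sum_blocks by simp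
qed

lemma ennreal_disc_cost_induced_plan:
  "ennreal (disc_cost \<Omega> c p J K a0 a1 induced_plan) = (\<Sum>n<N. ennreal (\<nu> n) * OTval \<Omega> c p (b0 n) (b1 n))"
proof -
  have "ennreal (\<Sum>n<N. \<nu> n * Wp \<Omega> c p (b0 n) (b1 n) powr p)
      = (\<Sum>n<N. ennreal (\<nu> n * Wp \<Omega> c p (b0 n) (b1 n) powr p))"
    using \<nu>_nonneg by (intro sum_ennreal[symmetric]) simp
  also have "\<dots> = (\<Sum>n<N. ennreal (\<nu> n) * OTval \<Omega> c p (b0 n) (b1 n))"
    using \<nu>_nonneg b0 b1 by (intro sum.cong refl) (simp add: ennreal_mult Wp_powr_eq_OTval_atoms)
  finally show ?thesis
    unfolding disc_cost_induced_plan .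
qed

lemma tcost_mix_components:
  "tcost \<Omega> c p (mix {..<N} \<nu> \<gamma>s) = (\<Sum>n<N. ennreal (\<nu> n) * tcost \<Omega> c p (\<gamma>s n))"
  using couplingsD(2)[OF \<gamma>s_couplings] by (intro tcost_mix[OF Omega_borel c_meas]) auto

lemma disc_cost_induced_plan_le: "ennreal (disc_cost \<Omega> c p J K a0 a1 induced_plan) \<le> tcost \<Omega> c p (mix {..<N} \<nu> \<gamma>s)"
  unfolding ennreal_disc_cost_induced_plan tcost_mix_components OTval_def
  using \<gamma>s_couplings by (intro sum_mono mult_left_mono INF_lower) auto

lemma components_optimal:
  assumes tight: "tcost \<Omega> c p (mix {..<N} \<nu> \<gamma>s) \<le> ennreal (disc_cost \<Omega> c p J K a0 a1 induced_plan)"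
    and n: "n < N" "0 < \<nu> n"
  shows "\<gamma>s n \<in> opt_plans \<Omega> c p (b0 n) (b1 n)"
proof -
  have "ennreal (\<nu> n) * tcost \<Omega> c p (\<gamma>s n) = ennreal (\<nu> n) * OTval \<Omega> c p (b0 n) (b1 n)"
  proof (rule ennreal_sum_le_sum_imp_eq[where S = "{..<N}"])
    show "ennreal (\<nu> m) * OTval \<Omega> c p (b0 m) (b1 m) \<le> ennreal (\<nu> m) * tcost \<Omega> c p (\<gamma>s m)"
      if "m \<in> {..<N}" for m
      unfolding OTval_def using \<gamma>s_couplings that by (intro mult_left_mono INF_lower) auto
    show "(\<Sum>m<N. ennreal (\<nu> m) * tcost \<Omega> c p (\<gamma>s m)) \<le> (\<Sum>m<N. ennreal (\<nu> m) * OTval \<Omega> c p (b0 m) (b1 m))"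
      using tight unfolding tcost_mix_components ennreal_disc_cost_induced_plan .
    show "(\<Sum>m<N. ennreal (\<nu> m) * OTval \<Omega> c p (b0 m) (b1 m)) < \<infinity>"
      unfolding ennreal_disc_cost_induced_plan[symmetric] by simp
  qed (use n in auto)
  then have "tcost \<Omega> c p (\<gamma>s n) = OTval \<Omega> c p (b0 n) (b1 n)"
    using n by (simp add: ennreal_mult_cancel_left)
  then show ?thesis
    unfolding opt_plans_def using \<gamma>s_couplings[OF n(1)] by simp
qed

lemma block_weights:
  assumes "block j k \<noteq> {}"
  shows "(\<lambda>n. \<nu> n / sum \<nu> (block j k)) \<in> prob_simplex (block j k)"
proof -
  have "0 < sum \<nu> (block j k)"
    using assms finite_block by (intro sum_pos) (auto simp: block_def)
  then show ?thesis
    unfolding prob_simplex_def by (auto simp: block_def simp flip: sum_divide_distrib)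
qed

lemma block_plan_in_couplings:
  assumes "j < J" "k < K"
  shows "block_plan j k \<in> couplings (a0 j) (a1 k)"
proof (cases "block j k = {}")
  case True
  then show ?thesis
    using some_opt_plan[OF a0 a1] assms by (simp add: block_plan_def opt_plans_def)
next
  case False
  have "\<gamma>s n \<in> couplings (a0 j) (a1 k)" if "n \<in> block j k" for n
  proof -
    have "n < N" "b0 n = a0 j" "b1 n = a1 k"
      using that by (auto simp: block_def)
    then show ?thesis
      using \<gamma>s_couplings[of n] by metis
  qed
  then show ?thesis
    unfolding block_plan_def using False atom_prob[OF a0] atom_prob[OF a1] assms
    by (simp add: mix_in_couplings_const[OF finite_block block_weights])
qed

lemma block_plan_optimal:
  assumes tight: "tcost \<Omega> c p (mix {..<N} \<nu> \<gamma>s) \<le> ennreal (disc_cost \<Omega> c p J K a0 a1 induced_plan)"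
    and "j < J" "k < K"
  shows "block_plan j k \<in> opt_plans \<Omega> c p (a0 j) (a1 k)"
proof (cases "block j k = {}")
  case True
  then show ?thesis
    using some_opt_plan[OF a0 a1] assms by (simp add: block_plan_def)
next
  case False
  have "\<gamma>s n \<in> opt_plans \<Omega> c p (a0 j) (a1 k)" if "n \<in> block j k" for n
  proof -
    have "n < N" "0 < \<nu> n" "b0 n = a0 j" "b1 n = a1 k"
      using that by (auto simp: block_def)
    then show ?thesis
      using components_optimal[OF tight] by metis
  qed
  then show ?thesis
    unfolding block_plan_def using False assms
    by (simp add: opt_plans_mix[OF finite_block block_weights _ a0 a1])
qed

lemma mix_eq_glued_plan: "mix {..<N} \<nu> \<gamma>s = glued_plan J K induced_plan block_plan"
  unfolding glued_plan_def
proof (rule mix_eqI)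
  fix A :: "('a \<times> 'a) set" assume A: "A \<in> sets borel"
  have block_term: "induced_plan j k * measure (block_plan j k) A
      = atom_share lam0 a0 J j * atom_share lam1 a1 K k * (\<Sum>n\<in>block j k. \<nu> n * measure (\<gamma>s n) A)" for j k
  proof (cases "block j k = {}")
    case False
    have "block_plan j k = mix (block j k) (\<lambda>n. \<nu> n / sum \<nu> (block j k)) \<gamma>s"
      using False by (simp add: block_plan_def)
    moreover have "n \<in> block j k \<Longrightarrow> prob_space (\<gamma>s n) \<and> sets (\<gamma>s n) = sets borel" for n
      using couplingsD(1,2)[OF \<gamma>s_couplings] by (simp add: block_def)
    ultimately have "measure (block_plan j k) A = (\<Sum>n\<in>block j k. \<nu> n / sum \<nu> (block j k) * measure (\<gamma>s n) A)"
      using block_weights[OF False] A by (simp add: measure_mix[OF finite_block] prob_simplex_def)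
    also have "\<dots> = (\<Sum>n\<in>block j k. \<nu> n * measure (\<gamma>s n) A) / sum \<nu> (block j k)"
      by (simp add: sum_divide_distrib)
    moreover have "0 < sum \<nu> (block j k)"
      using False finite_block by (intro sum_pos) (auto simp: block_def)
    ultimately show ?thesis
      unfolding induced_plan_def by simp
  qed (simp add: induced_plan_def)
  have "emeasure (mix {..<N} \<nu> \<gamma>s) A = ennreal (\<Sum>n<N. \<nu> n * measure (\<gamma>s n) A)"
    using couplingsD(1,2)[OF \<gamma>s_couplings] \<nu>_nonneg A by (intro emeasure_mix_eq_sum_measure) auto
  also have "(\<Sum>n<N. \<nu> n * measure (\<gamma>s n) A)
      = (\<Sum>(j, k)\<in>{..<J} \<times> {..<K}. induced_plan j k * measure (block_plan j k) A)"
    unfolding sum_blocks[symmetric] block_term by (simp add: sum.cartesian_product)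
  also have "ennreal \<dots> = emeasure (mix ({..<J} \<times> {..<K}) (\<lambda>(j, k). induced_plan j k) (\<lambda>(j, k). block_plan j k)) A"
    using couplingsD(1,2)[OF block_plan_in_couplings] induced_plan_in_disc_plans A
    by (subst emeasure_mix_eq_sum_measure) (auto simp: disc_plans_def split_beta)
  finally show "emeasure (mix {..<N} \<nu> \<gamma>s) A
      = emeasure (mix ({..<J} \<times> {..<K}) (\<lambda>(j, k). induced_plan j k) (\<lambda>(j, k). block_plan j k)) A" .
qed

end

context mixture_pair
begin

lemma admissible_coupling_decomposition:
  assumes ident: "identifiable \<A>"
    and \<gamma>: "\<gamma> \<in> couplings (mix {..<J} lam0 a0) (mix {..<K} lam1 a1) \<inter> Gam_mix \<A> G"
  obtains w g where "w \<in> disc_plans J K lam0 lam1" and "\<gamma> = glued_plan J K w g"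
    and "ennreal (disc_cost \<Omega> c p J K a0 a1 w) \<le> tcost \<Omega> c p \<gamma>"
    and "tcost \<Omega> c p \<gamma> \<le> ennreal (disc_cost \<Omega> c p J K a0 a1 w)
      \<Longrightarrow> \<forall>j<J. \<forall>k<K. g j k \<in> opt_plans \<Omega> c p (a0 j) (a1 k)"
proof -
  obtain N :: nat and \<nu> \<gamma>s b0 b1 where \<nu>: "\<nu> \<in> prob_simplex {..<N}"
    and b: "\<forall>n<N. b0 n \<in> \<A> \<and> b1 n \<in> \<A> \<and> \<gamma>s n \<in> G (b0 n) (b1 n)" and \<gamma>_eq: "\<gamma> = mix {..<N} \<nu> \<gamma>s"
    using \<gamma> by (auto elim: Gam_mixE)
  have "\<gamma> \<in> couplings (mix {..<N} \<nu> b0) (mix {..<N} \<nu> b1)"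
    unfolding \<gamma>_eq using b G_subset_couplings by (intro mix_in_couplings[OF _ \<nu>]) auto
  then have marginal0: "mix {..<N} \<nu> b0 = mix {..<J} lam0 a0"
    and marginal1: "mix {..<N} \<nu> b1 = mix {..<K} lam1 a1"
    using \<gamma> by (simp_all add: couplings_def)
  interpret plan_decomposition \<Omega> c p \<A> G J K lam0 lam1 a0 a1 N \<nu> \<gamma>s b0 b1
    using ident \<nu> b marginal0 marginal1 by unfold_locales auto
  show ?thesis
    using that[OF induced_plan_in_disc_plans] \<gamma>_eq mix_eq_glued_plan disc_cost_induced_plan_le block_plan_optimal
    by auto
qed

lemma disc_plans_nonempty: "disc_plans J K lam0 lam1 \<noteq> {}"
  using disc_plans_product[OF lam0 lam1] by blast

lemma Inf_disc_cost_nonneg: "0 \<le> Inf (disc_cost \<Omega> c p J K a0 a1 ` disc_plans J K lam0 lam1)"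
  using disc_plans_nonempty by (intro cInf_greatest) (auto simp: disc_cost_nonneg)

lemma INF_admissible_couplings_eq:
  assumes ident: "identifiable \<A>"
  shows "(INF \<gamma>\<in>couplings (mix {..<J} lam0 a0) (mix {..<K} lam1 a1) \<inter> Gam_mix \<A> G. tcost \<Omega> c p \<gamma>)
    = ennreal (Inf (disc_cost \<Omega> c p J K a0 a1 ` disc_plans J K lam0 lam1))"
proof (rule INF_eq_ennreal_Inf)
  fix \<gamma> assume \<gamma>: "\<gamma> \<in> couplings (mix {..<J} lam0 a0) (mix {..<K} lam1 a1) \<inter> Gam_mix \<A> G"
  obtain w g where "w \<in> disc_plans J K lam0 lam1" "\<gamma> = glued_plan J K w g"
    "ennreal (disc_cost \<Omega> c p J K a0 a1 w) \<le> tcost \<Omega> c p \<gamma>"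
    "tcost \<Omega> c p \<gamma> \<le> ennreal (disc_cost \<Omega> c p J K a0 a1 w)
      \<Longrightarrow> \<forall>j<J. \<forall>k<K. g j k \<in> opt_plans \<Omega> c p (a0 j) (a1 k)"
    by (rule admissible_coupling_decomposition[OF ident \<gamma>]) (rule that)
  then show "\<exists>d\<in>disc_cost \<Omega> c p J K a0 a1 ` disc_plans J K lam0 lam1. ennreal d \<le> tcost \<Omega> c p \<gamma>"
    by blast
next
  fix d assume "d \<in> disc_cost \<Omega> c p J K a0 a1 ` disc_plans J K lam0 lam1"
  then obtain w where w: "w \<in> disc_plans J K lam0 lam1" and d: "d = disc_cost \<Omega> c p J K a0 a1 w"
    by blast
  define g where "g j k = (SOME \<gamma>. \<gamma> \<in> opt_plans \<Omega> c p (a0 j) (a1 k))" for j k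
  have g: "\<And>j k. j < J \<Longrightarrow> k < K \<Longrightarrow> g j k \<in> opt_plans \<Omega> c p (a0 j) (a1 k)"
    unfolding g_def using a0 a1 by (rule some_opt_plan)
  then have "glued_plan J K w g \<in> couplings (mix {..<J} lam0 a0) (mix {..<K} lam1 a1) \<inter> Gam_mix \<A> G"
    by (rule glued_optimal_plan_admissible[OF w])
  then show "\<exists>\<gamma>\<in>couplings (mix {..<J} lam0 a0) (mix {..<K} lam1 a1) \<inter> Gam_mix \<A> G. tcost \<Omega> c p \<gamma> \<le> ennreal d"
    using tcost_glued_plan[OF w g] d by force
qed (use disc_plans_nonempty in \<open>auto simp: disc_cost_nonneg\<close>)

lemma admissible_minimizers_eq:
  assumes ident: "identifiable \<A>"
  shows "tilde_minimizers \<Omega> c p \<A> G (mix {..<J} lam0 a0) (mix {..<K} lam1 a1)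
    = {glued_plan J K w g | w g. w \<in> disc_minimizers \<Omega> c p J K lam0 a0 lam1 a1 \<and>
        (\<forall>j<J. \<forall>k<K. g j k \<in> opt_plans \<Omega> c p (a0 j) (a1 k))}" (is "?L = ?R")
proof (intro set_eqI iffI)
  let ?D = "disc_cost \<Omega> c p J K a0 a1 ` disc_plans J K lam0 lam1"
  fix \<gamma>
  assume "\<gamma> \<in> ?L"
  then have \<gamma>: "\<gamma> \<in> couplings (mix {..<J} lam0 a0) (mix {..<K} lam1 a1) \<inter> Gam_mix \<A> G"
    and min: "tcost \<Omega> c p \<gamma> = ennreal (Inf ?D)"
    unfolding tilde_minimizers_def INF_admissible_couplings_eq[OF ident] by auto
  obtain w g where w: "w \<in> disc_plans J K lam0 lam1" and \<gamma>_eq: "\<gamma> = glued_plan J K w g"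
    and le: "ennreal (disc_cost \<Omega> c p J K a0 a1 w) \<le> tcost \<Omega> c p \<gamma>"
    and tight: "tcost \<Omega> c p \<gamma> \<le> ennreal (disc_cost \<Omega> c p J K a0 a1 w)
      \<Longrightarrow> \<forall>j<J. \<forall>k<K. g j k \<in> opt_plans \<Omega> c p (a0 j) (a1 k)"
    by (rule admissible_coupling_decomposition[OF ident \<gamma>]) (rule that)
  have "disc_cost \<Omega> c p J K a0 a1 w \<le> Inf ?D"
    using le min Inf_disc_cost_nonneg by simp
  then have "w \<in> disc_minimizers \<Omega> c p J K lam0 a0 lam1 a1"
    by (rule disc_minimizersI[OF w])
  moreover have "tcost \<Omega> c p \<gamma> \<le> ennreal (disc_cost \<Omega> c p J K a0 a1 w)"
    using \<open>w \<in> disc_minimizers \<Omega> c p J K lam0 a0 lam1 a1\<close> min by (simp add: disc_minimizers_def)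
  ultimately show "\<gamma> \<in> ?R"
    using tight \<gamma>_eq by auto
next
  fix \<gamma>
  assume "\<gamma> \<in> ?R"
  then obtain w g where \<gamma>_eq: "\<gamma> = glued_plan J K w g" and w: "w \<in> disc_minimizers \<Omega> c p J K lam0 a0 lam1 a1"
    and g: "\<forall>j<J. \<forall>k<K. g j k \<in> opt_plans \<Omega> c p (a0 j) (a1 k)"
    by blast
  have w_plan: "w \<in> disc_plans J K lam0 lam1"
    using w by (simp add: disc_minimizers_def)
  have "tcost \<Omega> c p \<gamma> = ennreal (Inf (disc_cost \<Omega> c p J K a0 a1 ` disc_plans J K lam0 lam1))"
    unfolding \<gamma>_eq using tcost_glued_plan[OF w_plan] g w by (simp add: disc_minimizers_def)
  then show "\<gamma> \<in> ?L"
    using glued_optimal_plan_admissible[OF w_plan] g \<gamma>_eq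
    unfolding tilde_minimizers_def INF_admissible_couplings_eq[OF ident] by simp
qed

end

theorem mainTheorem3:
  fixes \<Omega> :: "'a::euclidean_space set"
    and c :: "'a \<Rightarrow> 'a \<Rightarrow> real"
    and p :: real
    and \<A> :: "'a measure set"
    and G :: "'a measure \<Rightarrow> 'a measure \<Rightarrow> ('a \<times> 'a) measure set"
    and J K :: nat
    and lam0 lam1 :: "nat \<Rightarrow> real"
    and a0 a1 :: "nat \<Rightarrow> 'a measure"
  assumes Omega_borel: "\<Omega> \<in> sets borel"
    and p_gt: "p > 1"
    and c_metric: "is_metric_on \<Omega> c"
    and c_meas: "(\<lambda>z. c (fst z) (snd z)) \<in> borel_measurable (restrict_space borel (\<Omega> \<times> \<Omega>))"
    and A_sub: "\<A> \<subseteq> Pp \<Omega> c p"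
    and opt_exists: "\<forall>b0\<in>\<A>. \<forall>b1\<in>\<A>. opt_plans \<Omega> c p b0 b1 \<noteq> {}"
    and ident: "identifiable \<A>"
    and adm: "admissible \<Omega> c p \<A> G"
    and J_pos: "0 < J" and lam0: "lam0 \<in> prob_simplex {..<J}" and a0: "\<forall>j<J. a0 j \<in> \<A>"
    and K_pos: "0 < K" and lam1: "lam1 \<in> prob_simplex {..<K}" and a1: "\<forall>k<K. a1 k \<in> \<A>"
  shows "delta_tilde \<Omega> c p \<A> G (mix {..<J} lam0 a0) (mix {..<K} lam1 a1)
           = delta_M \<Omega> c p J K lam0 a0 lam1 a1
       \<and> tilde_minimizers \<Omega> c p \<A> G (mix {..<J} lam0 a0) (mix {..<K} lam1 a1)
           = {mix ({..<J} \<times> {..<K}) (\<lambda>(j, k). w j k) (\<lambda>(j, k). g j k) | w g.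
                w \<in> disc_minimizers \<Omega> c p J K lam0 a0 lam1 a1 \<and>
                (\<forall>j<J. \<forall>k<K. g j k \<in> opt_plans \<Omega> c p (a0 j) (a1 k))}"
proof -
  interpret mixture_pair \<Omega> c p \<A> G J K lam0 lam1 a0 a1
    using Omega_borel p_gt c_metric c_meas A_sub opt_exists adm lam0 a0 lam1 a1
    by unfold_locales auto
  show ?thesis
    unfolding delta_tilde_def delta_M_def INF_admissible_couplings_eq[OF ident]
      admissible_minimizers_eq[OF ident] glued_plan_def
    using Inf_disc_cost_nonneg by simp
qed

end
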